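(* Let $p=p(n)$ be a sequence of probability values and let $\Gamma\in G(n,p)$. Suppose that (i) for some sequence $\omega(n)\to\infty$, $p>\frac{\log(n)+\log(\log(n))+\omega(n)}{n}$, and (ii) either $n(1-p)\to 0$ or $n(1-p)\to\infty$. Then a.a.s. $\Gamma$ has no star-cut-vertices. Further, if only hypothesis (i) holds, then a.a.s. for every star-cut-vertex $a$ of $\Gamma$, at most one connected component of the full subgraph $\Gamma\setminus\mathrm{st}(a)$ has more than one vertex.
   Context: $G(n,p)$ is the Erdős–Rényi random graph on $n$ vertices, each edge present independently with probability $p=p(n)$; a.a.s. means with probability tending to $1$ as $n\to\infty$; $\log$ is the natural logarithm. For a vertex $a$, $\mathrm{st}(a)$ is $a$ together with all vertices adjacent to $a$. A vertex $a$ is a star-cut-vertex of $\Gamma$ if the full (induced) subgraph on $V\setminus\mathrm{st}(a)$ is disconnected. *)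

theory Defs
  imports Complex_Main
begin

text \<open>Graphs on the vertex set {0..<n}: a graph is a set E of 2-element subsets
  (edges) of {0..<n}.\<close>

definition all_pairs :: "nat \<Rightarrow> nat set set" where
  "all_pairs n = {{i, j} | i j. i < n \<and> j < n \<and> i \<noteq> j}"

definition gnp_prob :: "nat \<Rightarrow> real \<Rightarrow> (nat set set \<Rightarrow> bool) \<Rightarrow> real" where
  "gnp_prob n p P =
     (\<Sum>E\<in>Pow (all_pairs n).
        (if P E then p ^ card E * (1 - p) ^ (card (all_pairs n) - card E) else 0))"

definition star :: "nat set set \<Rightarrow> nat \<Rightarrow> nat set" where
  "star E a = insert a {b. {a, b} \<in> E}"

definition reach_in :: "nat set set \<Rightarrow> nat set \<Rightarrow> nat \<Rightarrow> nat \<Rightarrow> bool" where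
  "reach_in E S = (\<lambda>x y. x \<in> S \<and> y \<in> S \<and> {x, y} \<in> E)\<^sup>*\<^sup>*"

definition connected_in :: "nat set set \<Rightarrow> nat set \<Rightarrow> bool" where
  "connected_in E S \<longleftrightarrow> (\<forall>x\<in>S. \<forall>y\<in>S. reach_in E S x y)"

definition component_in :: "nat set set \<Rightarrow> nat set \<Rightarrow> nat \<Rightarrow> nat set" where
  "component_in E S x = {y \<in> S. reach_in E S x y}"

definition star_cut_vertex :: "nat \<Rightarrow> nat set set \<Rightarrow> nat \<Rightarrow> bool" where
  "star_cut_vertex n E a \<longleftrightarrow> a < n \<and> \<not> connected_in E ({0..<n} - star E a)"

definition at_most_one_big_component :: "nat set set \<Rightarrow> nat set \<Rightarrow> bool" where
  "at_most_one_big_component E S \<longleftrightarrow>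
     (\<forall>x\<in>S. \<forall>y\<in>S. card (component_in E S x) > 1 \<and> card (component_in E S y) > 1
        \<longrightarrow> component_in E S x = component_in E S y)"

end

theory Submission
  imports Defs "HOL-Real_Asymp.Real_Asymp"
begin

(*
  A star-cut-vertex a leaves two vertices x, y of \<Gamma> \<setminus> st(a) in different components, so x, y, a
  are pairwise non-adjacent and every common neighbour of x and y is adjacent to a.  The whole proof
  is a union bound over such local configurations.

  When p > n^(-1/3), the expected number of these triples is at most n^3 (1-p)^3 (1 - p^2 (1-p))^(n-3),
  which tends to 0 as long as n(1-p) tends to 0 or to infinity; two components containing an edge
  each force a five-vertex configuration whose expected number tends to 0 without that proviso.

  When p \<le> n^(-1/3), look at the smaller component C of \<Gamma> \<setminus> st(a).  If C is a single vertex, it is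
  isolated, a leaf, or all of its (at least two) neighbours are adjacent to a.  Otherwise C carries a
  spanning tree, no edge joins C to a, and every other vertex is adjacent to a or sees nothing of
  C \<union> {a}.  Summing over |C| = k \<le> (n-1)/2 gives a bound that tends to 0 once
  np \<ge> log n + log log n + \<omega>(n) with \<omega> \<rightarrow> \<infinity>.
*)

section \<open>Random subsets of a finite set\<close>

definition subset_prob :: "real \<Rightarrow> 'a set \<Rightarrow> ('a set \<Rightarrow> bool) \<Rightarrow> real" where
  "subset_prob p S P =
     (\<Sum>E\<in>Pow S. if P E then p ^ card E * (1 - p) ^ (card S - card E) else 0)"

lemma gnp_prob_eq_subset_prob: "gnp_prob n p P = subset_prob p (all_pairs n) P"
  unfolding gnp_prob_def subset_prob_def by simp

lemma subset_prob_cong: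
  assumes "\<And>E. E \<subseteq> S \<Longrightarrow> P E = Q E"
  shows "subset_prob p S P = subset_prob p S Q"
  unfolding subset_prob_def by (rule sum.cong) (use assms in auto)

lemma subset_prob_conj_const:
  "subset_prob p S (\<lambda>E. D \<and> P E) = (if D then subset_prob p S P else 0)"
  unfolding subset_prob_def by auto

lemma subset_prob_disj_disjoint:
  assumes "\<And>E. E \<subseteq> S \<Longrightarrow> \<not> (P E \<and> Q E)"
  shows "subset_prob p S (\<lambda>E. P E \<or> Q E) = subset_prob p S P + subset_prob p S Q"
  unfolding subset_prob_def sum.distrib[symmetric] by (rule sum.cong) (use assms in auto)

lemma subset_prob_eq_set:
  assumes "finite S" "X \<subseteq> S"
  shows "subset_prob p S (\<lambda>E. E = X) = p ^ card X * (1 - p) ^ (card S - card X)"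
proof -
  have "subset_prob p S (\<lambda>E. E = X) =
      (\<Sum>E\<in>Pow S. if E = X then p ^ card X * (1 - p) ^ (card S - card X) else 0)"
    unfolding subset_prob_def by (rule sum.cong) auto
  then show ?thesis
    using assms by (simp add: sum.delta)
qed

lemma subset_prob_Un_disjoint:
  assumes fin: "finite A" "finite B" and disj: "A \<inter> B = {}"
  shows "subset_prob p (A \<union> B) (\<lambda>E. P (E \<inter> A) \<and> Q (E \<inter> B)) = subset_prob p A P * subset_prob p B Q"
proof -
  let ?h = "\<lambda>(X, Y). X \<union> Y"
  define g where "g = (\<lambda>E. if P (E \<inter> A) \<and> Q (E \<inter> B)
      then p ^ card E * (1 - p) ^ (card (A \<union> B) - card E) else 0)"
  have inj: "inj_on ?h (Pow A \<times> Pow B)"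
  proof (rule inj_onI, clarify)
    fix X Y X' Y' assume "X \<subseteq> A" "Y \<subseteq> B" "X' \<subseteq> A" "Y' \<subseteq> B" "X \<union> Y = X' \<union> Y'"
    then show "X = X' \<and> Y = Y'" using disj by blast
  qed
  have img: "Pow (A \<union> B) = ?h ` (Pow A \<times> Pow B)"
  proof
    show "Pow (A \<union> B) \<subseteq> ?h ` (Pow A \<times> Pow B)"
    proof
      fix E assume "E \<in> Pow (A \<union> B)"
      then have "E = ?h (E \<inter> A, E \<inter> B)" "(E \<inter> A, E \<inter> B) \<in> Pow A \<times> Pow B" by auto
      then show "E \<in> ?h ` (Pow A \<times> Pow B)" by blast
    qed
  qed auto
  have split: "g (X \<union> Y) = (if P X then p ^ card X * (1 - p) ^ (card A - card X) else 0) *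
        (if Q Y then p ^ card Y * (1 - p) ^ (card B - card Y) else 0)"
    if "X \<subseteq> A" "Y \<subseteq> B" for X Y
  proof -
    have "finite X" "finite Y" "X \<inter> Y = {}"
      using that fin disj finite_subset by auto
    then have cXY: "card (X \<union> Y) = card X + card Y"
      by (rule card_Un_disjoint)
    have "card (A \<union> B) = card A + card B" "card X \<le> card A" "card Y \<le> card B"
      using that fin disj by (auto simp: card_Un_disjoint intro: card_mono)
    then have "card (A \<union> B) - card (X \<union> Y) = (card A - card X) + (card B - card Y)"
      using cXY by simp
    moreover have "(X \<union> Y) \<inter> A = X" "(X \<union> Y) \<inter> B = Y"
      using that disj by auto
    ultimately show ?thesis
      unfolding g_def by (simp add: cXY power_add)
  qed
  have "subset_prob p (A \<union> B) (\<lambda>E. P (E \<inter> A) \<and> Q (E \<inter> B)) = sum g (?h ` (Pow A \<times> Pow B))"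
    unfolding subset_prob_def g_def img by simp
  also have "\<dots> = sum (g \<circ> ?h) (Pow A \<times> Pow B)"
    by (rule sum.reindex[OF inj])
  also have "\<dots> = (\<Sum>X\<in>Pow A. \<Sum>Y\<in>Pow B. g (X \<union> Y))"
    by (subst sum.cartesian_product) (simp add: case_prod_unfold)
  also have "\<dots> = subset_prob p A P * subset_prob p B Q"
    unfolding subset_prob_def sum_product by (intro sum.cong refl) (simp add: split)
  finally show ?thesis .
qed

lemma subset_prob_True: "finite S \<Longrightarrow> subset_prob p S (\<lambda>_. True) = 1"
proof (induction S rule: finite_induct)
  case empty
  then show ?case by (simp add: subset_prob_def)
next
  case (insert x S)
  have "Pow {x} = {{}, {x}}" by auto
  then have single: "subset_prob p {x} (\<lambda>_. True) = 1"
    unfolding subset_prob_def by simp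
  have "subset_prob p ({x} \<union> S) (\<lambda>E. True \<and> True) = subset_prob p {x} (\<lambda>_. True) * subset_prob p S (\<lambda>_. True)"
    by (rule subset_prob_Un_disjoint) (use insert in auto)
  then show ?case using insert single by simp
qed

lemma subset_prob_not:
  assumes "finite S"
  shows "subset_prob p S (\<lambda>E. \<not> P E) = 1 - subset_prob p S P"
proof -
  have "1 = subset_prob p S (\<lambda>E. P E \<or> \<not> P E)"
    using subset_prob_True[OF assms] by simp
  also have "\<dots> = subset_prob p S P + subset_prob p S (\<lambda>E. \<not> P E)"
    by (rule subset_prob_disj_disjoint) auto
  finally show ?thesis by simp
qed

lemma subset_prob_restrict:
  assumes "finite S" "A \<subseteq> S"
  shows "subset_prob p S (\<lambda>E. P (E \<inter> A)) = subset_prob p A P"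
proof -
  have fin: "finite A" "finite (S - A)"
    using assms finite_subset by auto
  have "S = A \<union> (S - A)"
    using assms by auto
  then have "subset_prob p S (\<lambda>E. P (E \<inter> A)) = subset_prob p (A \<union> (S - A)) (\<lambda>E. P (E \<inter> A) \<and> True)"
    by simp
  also have "\<dots> = subset_prob p A P * subset_prob p (S - A) (\<lambda>_. True)"
    by (rule subset_prob_Un_disjoint) (use fin in auto)
  finally show ?thesis
    using subset_prob_True[OF fin(2)] by simp
qed

lemma subset_prob_Int_disjoint:
  assumes "finite S" "A \<subseteq> S" "B \<subseteq> S" "A \<inter> B = {}"
  shows "subset_prob p S (\<lambda>E. P (E \<inter> A) \<and> Q (E \<inter> B)) = subset_prob p A P * subset_prob p B Q"
proof -
  have "subset_prob p S (\<lambda>E. P (E \<inter> A) \<and> Q (E \<inter> B)) =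
        subset_prob p S (\<lambda>E. (\<lambda>F. P (F \<inter> A) \<and> Q (F \<inter> B)) (E \<inter> (A \<union> B)))"
    by (rule subset_prob_cong) (simp add: Int_assoc)
  also have "\<dots> = subset_prob p (A \<union> B) (\<lambda>F. P (F \<inter> A) \<and> Q (F \<inter> B))"
    by (rule subset_prob_restrict) (use assms in auto)
  also have "\<dots> = subset_prob p A P * subset_prob p B Q"
    by (rule subset_prob_Un_disjoint) (use assms finite_subset in auto)
  finally show ?thesis .
qed

lemma subset_prob_Int_blocks:
  assumes "finite S" "finite U" "\<And>u. u \<in> U \<Longrightarrow> B u \<subseteq> S"
    and "\<And>u v. u \<in> U \<Longrightarrow> v \<in> U \<Longrightarrow> u \<noteq> v \<Longrightarrow> B u \<inter> B v = {}"
  shows "subset_prob p S (\<lambda>E. \<forall>u\<in>U. Q u (E \<inter> B u)) = (\<Prod>u\<in>U. subset_prob p (B u) (Q u))"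
  using assms(2-4)
proof (induction U rule: finite_induct)
  case empty
  then show ?case using subset_prob_True[OF assms(1)] by simp
next
  case (insert u U)
  let ?R = "\<Union>v\<in>U. B v"
  have R: "?R \<subseteq> S" and disj: "B u \<inter> ?R = {}"
    using insert by fastforce+
  have restrict: "F \<inter> ?R \<inter> B v = F \<inter> B v" if "v \<in> U" for F v
    using that by auto
  have "subset_prob p S (\<lambda>E. \<forall>v\<in>insert u U. Q v (E \<inter> B v)) =
        subset_prob p S (\<lambda>E. Q u (E \<inter> B u) \<and> (\<lambda>F. \<forall>v\<in>U. Q v (F \<inter> B v)) (E \<inter> ?R))"
    by (rule subset_prob_cong) (simp add: restrict)
  also have "\<dots> = subset_prob p (B u) (Q u) * subset_prob p ?R (\<lambda>F. \<forall>v\<in>U. Q v (F \<inter> B v))"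
    by (rule subset_prob_Int_disjoint) (use insert R disj assms(1) in auto)
  also have "subset_prob p ?R (\<lambda>F. \<forall>v\<in>U. Q v (F \<inter> B v)) =
      subset_prob p S (\<lambda>F. (\<lambda>G. \<forall>v\<in>U. Q v (G \<inter> B v)) (F \<inter> ?R))"
    by (rule subset_prob_restrict[OF assms(1) R, symmetric])
  also have "\<dots> = subset_prob p S (\<lambda>F. \<forall>v\<in>U. Q v (F \<inter> B v))"
    by (rule subset_prob_cong) (simp add: restrict)
  finally show ?case
    using insert by simp
qed

lemma subset_prob_trace_and_blocks:
  assumes "finite S" "finite U" "A \<subseteq> S" "X \<subseteq> A"
    and "\<And>u. u \<in> U \<Longrightarrow> B u \<subseteq> S"
    and "\<And>u. u \<in> U \<Longrightarrow> A \<inter> B u = {}"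
    and "\<And>u v. u \<in> U \<Longrightarrow> v \<in> U \<Longrightarrow> u \<noteq> v \<Longrightarrow> B u \<inter> B v = {}"
  shows "subset_prob p S (\<lambda>E. E \<inter> A = X \<and> (\<forall>u\<in>U. Q u (E \<inter> B u))) =
     p ^ card X * (1 - p) ^ (card A - card X) * (\<Prod>u\<in>U. subset_prob p (B u) (Q u))"
proof -
  let ?R = "\<Union>u\<in>U. B u"
  have R: "?R \<subseteq> S" and disj: "A \<inter> ?R = {}"
    using assms(5,6) by blast+
  have fin: "finite A" "finite ?R"
    using assms(1,3) R finite_subset by blast+
  have restrict: "E \<inter> ?R \<inter> B u = E \<inter> B u" if "u \<in> U" for E u
    using that by auto
  have "subset_prob p S (\<lambda>E. E \<inter> A = X \<and> (\<forall>u\<in>U. Q u (E \<inter> B u))) =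
        subset_prob p S (\<lambda>E. (\<lambda>F. F = X) (E \<inter> A) \<and> (\<lambda>F. \<forall>u\<in>U. Q u (F \<inter> B u)) (E \<inter> ?R))"
    by (rule subset_prob_cong) (auto simp: restrict)
  also have "\<dots> = subset_prob p A (\<lambda>F. F = X) * subset_prob p ?R (\<lambda>F. \<forall>u\<in>U. Q u (F \<inter> B u))"
    by (rule subset_prob_Int_disjoint) (use assms R disj in auto)
  also have "subset_prob p ?R (\<lambda>F. \<forall>u\<in>U. Q u (F \<inter> B u)) = (\<Prod>u\<in>U. subset_prob p (B u) (Q u))"
    by (rule subset_prob_Int_blocks) (use assms fin in auto)
  also have "subset_prob p A (\<lambda>F. F = X) = p ^ card X * (1 - p) ^ (card A - card X)"
    by (rule subset_prob_eq_set) (use assms fin in auto)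
  finally show ?thesis .
qed

lemma subset_prob_trace:
  assumes "finite S" "A \<subseteq> S" "X \<subseteq> A"
  shows "subset_prob p S (\<lambda>E. E \<inter> A = X) = p ^ card X * (1 - p) ^ (card A - card X)"
proof -
  have "subset_prob p S (\<lambda>E. E \<inter> A = X) = subset_prob p A (\<lambda>F. F = X)"
    by (rule subset_prob_restrict[OF assms(1,2)])
  then show ?thesis
    using subset_prob_eq_set[OF _ assms(3)] assms(1,2) finite_subset by metis
qed

lemma subset_prob_neq_set:
  assumes "finite S" "X \<subseteq> S"
  shows "subset_prob p S (\<lambda>E. E \<noteq> X) = 1 - p ^ card X * (1 - p) ^ (card S - card X)"
  using subset_prob_not[OF assms(1), where P = "\<lambda>E. E = X"] subset_prob_eq_set[OF assms] by simp

lemma subset_prob_mem: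
  assumes "finite S" "e \<in> S"
  shows "subset_prob p S (\<lambda>E. e \<in> E) = p"
proof -
  have "subset_prob p S (\<lambda>E. e \<in> E) = subset_prob p S (\<lambda>E. E \<inter> {e} = {e})"
    by (rule subset_prob_cong) auto
  then show ?thesis
    using subset_prob_trace[OF assms(1), of "{e}" "{e}"] assms by simp
qed

context
  fixes p :: real
  assumes p0: "0 \<le> p" and p1: "p \<le> 1"
begin

lemma subset_prob_nonneg: "0 \<le> subset_prob p S P"
  unfolding subset_prob_def using p0 p1 by (intro sum_nonneg) simp

lemma subset_prob_mono:
  assumes "\<And>E. E \<subseteq> S \<Longrightarrow> P E \<Longrightarrow> Q E"
  shows "subset_prob p S P \<le> subset_prob p S Q"
  unfolding subset_prob_def by (rule sum_mono) (use assms p0 p1 in auto)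

lemma subset_prob_disj_le:
  "subset_prob p S (\<lambda>E. P E \<or> Q E) \<le> subset_prob p S P + subset_prob p S Q"
  unfolding subset_prob_def sum.distrib[symmetric] by (rule sum_mono) (use p0 p1 in auto)

lemma subset_prob_Bex_le_sum:
  assumes "finite X"
  shows "subset_prob p S (\<lambda>E. \<exists>x\<in>X. P x E) \<le> (\<Sum>x\<in>X. subset_prob p S (P x))"
  using assms
proof (induction X rule: finite_induct)
  case empty
  then show ?case unfolding subset_prob_def by simp
next
  case (insert x X)
  have "subset_prob p S (\<lambda>E. \<exists>y\<in>insert x X. P y E) = subset_prob p S (\<lambda>E. P x E \<or> (\<exists>y\<in>X. P y E))"
    by (rule subset_prob_cong) auto
  also have "\<dots> \<le> subset_prob p S (P x) + subset_prob p S (\<lambda>E. \<exists>y\<in>X. P y E)"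
    by (rule subset_prob_disj_le)
  finally show ?case
    using insert by simp
qed

lemma subset_prob_Bex_le:
  assumes "finite X" "\<And>x. x \<in> X \<Longrightarrow> subset_prob p S (P x) \<le> c"
  shows "subset_prob p S (\<lambda>E. \<exists>x\<in>X. P x E) \<le> real (card X) * c"
proof -
  have "subset_prob p S (\<lambda>E. \<exists>x\<in>X. P x E) \<le> (\<Sum>x\<in>X. subset_prob p S (P x))"
    by (rule subset_prob_Bex_le_sum[OF assms(1)])
  also have "\<dots> \<le> (\<Sum>x\<in>X. c)"
    by (rule sum_mono) (use assms in auto)
  finally show ?thesis by simp
qed

lemma subset_prob_Bex_vertices_le:
  assumes "\<And>x. x < n \<Longrightarrow> subset_prob p S (P x) \<le> c"
  shows "subset_prob p S (\<lambda>E. \<exists>x\<in>{0..<n}. P x E) \<le> real n * c"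
  using subset_prob_Bex_le[of "{0..<n}" S P c] assms by simp

end

section \<open>Reachability in induced subgraphs\<close>

lemma reach_in_refl: "reach_in E S x x"
  unfolding reach_in_def by simp

lemma reach_in_step: "x \<in> S \<Longrightarrow> y \<in> S \<Longrightarrow> {x, y} \<in> E \<Longrightarrow> reach_in E S x y"
  unfolding reach_in_def by (rule r_into_rtranclp) simp

lemma reach_in_trans: "reach_in E S x y \<Longrightarrow> reach_in E S y z \<Longrightarrow> reach_in E S x z"
  unfolding reach_in_def by (rule rtranclp_trans)

lemma reach_in_sym: "reach_in E S x y \<Longrightarrow> reach_in E S y x"
proof -
  have "symp (\<lambda>x y. x \<in> S \<and> y \<in> S \<and> {x, y} \<in> E)"
    by (auto simp: symp_def insert_commute)
  then have "symp (reach_in E S)"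
    unfolding reach_in_def by (rule symp_rtranclp)
  then show "reach_in E S x y \<Longrightarrow> reach_in E S y x"
    by (meson sympD)
qed

lemma reach_in_first_step:
  "reach_in E S x y \<Longrightarrow> x \<noteq> y \<Longrightarrow> \<exists>z. z \<in> S \<and> x \<in> S \<and> {x, z} \<in> E \<and> reach_in E S z y"
  unfolding reach_in_def by (induction rule: converse_rtranclp_induct) auto

lemma component_in_subset: "component_in E S x \<subseteq> S"
  unfolding component_in_def by auto

lemma mem_component_in_self: "x \<in> S \<Longrightarrow> x \<in> component_in E S x"
  unfolding component_in_def using reach_in_refl by auto

lemma component_in_eq: "reach_in E S x y \<Longrightarrow> component_in E S x = component_in E S y"
  unfolding component_in_def using reach_in_sym reach_in_trans by blast

lemma component_in_closed:
  assumes "c \<in> component_in E S x" "u \<in> S" "{u, c} \<in> E"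
  shows "u \<in> component_in E S x"
proof -
  have "reach_in E S c u"
    using assms reach_in_step[of c S u E] component_in_subset by (auto simp: insert_commute)
  then show ?thesis
    using assms(1,2) reach_in_trans unfolding component_in_def by blast
qed

lemma component_in_neighbour:
  assumes "x \<in> S" "card (component_in E S x) > 1"
  obtains z where "z \<in> S" "{x, z} \<in> E" "reach_in E S x z"
proof -
  have "component_in E S x \<noteq> {x}"
    using assms(2) by auto
  then obtain w where "w \<in> component_in E S x" "w \<noteq> x"
    using mem_component_in_self[OF assms(1)] by blast
  then obtain z where "z \<in> S" "{x, z} \<in> E"
    unfolding component_in_def using reach_in_first_step by blast
  then show ?thesis
    using that assms(1) reach_in_step by metis
qed

definition pairs_in :: "nat set \<Rightarrow> nat set set" where
  "pairs_in C = {{x, y} |x y. x \<in> C \<and> y \<in> C \<and> x \<noteq> y}"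

text \<open>A breadth-first search tree: every vertex other than the root is joined to a parent
  strictly closer to the root.\<close>

lemma component_in_spanning_tree:
  assumes "r \<in> S" "finite S" "\<And>x. {x} \<notin> E"
  obtains T where "T \<subseteq> E" "T \<subseteq> pairs_in (component_in E S r)"
    "card T = card (component_in E S r) - 1"
proof -
  define R where "R = (\<lambda>x y. x \<in> S \<and> y \<in> S \<and> {x, y} \<in> E)"
  define C where "C = component_in E S r"
  define d where "d = (\<lambda>v. LEAST m. (R ^^ m) r v)"
  have reach: "reach_in E S = R\<^sup>*\<^sup>*"
    unfolding reach_in_def R_def by simp
  have finC: "finite C"
    unfolding C_def component_in_def using assms(2) by simp
  have rC: "r \<in> C"
    unfolding C_def using assms(1) by (rule mem_component_in_self)
  have dist: "(R ^^ d v) r v" if "v \<in> C" for v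
  proof -
    from that have "R\<^sup>*\<^sup>* r v"
      unfolding C_def component_in_def reach by simp
    then obtain m where "(R ^^ m) r v"
      using rtranclp_imp_relpowp by metis
    then show ?thesis unfolding d_def by (rule LeastI)
  qed
  have "\<exists>w. w \<in> C \<and> {w, v} \<in> E \<and> d w < d v \<and> w \<noteq> v" if "v \<in> C - {r}" for v
  proof -
    have "d v \<noteq> 0"
      using dist[of v] that by (cases "d v") auto
    then obtain m where m: "d v = Suc m"
      using not0_implies_Suc by blast
    from dist[of v] m that obtain w where w1: "(R ^^ m) r w" and w2: "R w v"
      by (auto elim: relpowp_Suc_E)
    have "w \<in> C"
      using relpowp_imp_rtranclp[OF w1] w2 unfolding C_def component_in_def reach R_def by simp
    moreover have "d w \<le> m"
      unfolding d_def using w1 by (rule Least_le)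
    moreover have "w \<noteq> v"
      using w2 assms(3) unfolding R_def by auto
    ultimately show ?thesis using w2 m unfolding R_def by auto
  qed
  then obtain par where par: "\<And>v. v \<in> C - {r} \<Longrightarrow> par v \<in> C \<and> {par v, v} \<in> E \<and> d (par v) < d v \<and> par v \<noteq> v"
    by metis
  have inj: "inj_on (\<lambda>v. {par v, v}) (C - {r})"
  proof (rule inj_onI, rule ccontr)
    fix v w assume v: "v \<in> C - {r}" and w: "w \<in> C - {r}" and "{par v, v} = {par w, w}" "v \<noteq> w"
    then have "v = par w" "w = par v" by (auto simp: doubleton_eq_iff)
    then show False using par[OF v] par[OF w] by simp
  qed
  define T where "T = (\<lambda>v. {par v, v}) ` (C - {r})"
  have "card T = card C - 1"
    unfolding T_def using card_image[OF inj] finC rC by simp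
  moreover have "T \<subseteq> E"
    unfolding T_def using par by auto
  moreover have "T \<subseteq> pairs_in C"
    unfolding T_def pairs_in_def using par by fastforce
  ultimately show ?thesis
    using that unfolding C_def by blast
qed

lemma all_pairs_mem: "{x, y} \<in> all_pairs n \<longleftrightarrow> x < n \<and> y < n \<and> x \<noteq> y"
  unfolding all_pairs_def by (auto simp: doubleton_eq_iff)

lemma singleton_notin_all_pairs: "{x} \<notin> all_pairs n"
  unfolding all_pairs_def by (auto simp: doubleton_eq_iff)

lemma finite_all_pairs: "finite (all_pairs n)"
  by (rule finite_subset[of _ "Pow {0..<n}"]) (auto simp: all_pairs_def)

lemma mem_off_star_iff: "x \<in> {0..<n} - star E a \<longleftrightarrow> x < n \<and> x \<noteq> a \<and> {a, x} \<notin> E"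
  unfolding star_def by auto

section \<open>Configurations forced by a star-cut-vertex\<close>

definition incident_edges :: "nat \<Rightarrow> nat set \<Rightarrow> nat set set" where
  "incident_edges u X = (\<lambda>x. {u, x}) ` X"

text \<open>\<open>x\<close> and \<open>y\<close> lie outside \<open>st(a)\<close>, are not adjacent, and have no common neighbour outside
  \<open>st(a)\<close>.\<close>

definition unlinked_pair_event :: "nat \<Rightarrow> nat \<Rightarrow> nat \<Rightarrow> nat \<Rightarrow> nat set set \<Rightarrow> bool" where
  "unlinked_pair_event n a x y E \<longleftrightarrow> E \<inter> {{a, x}, {a, y}, {x, y}} = {} \<and>
     (\<forall>z\<in>{0..<n} - {a, x, y}. E \<inter> {{z, x}, {z, y}, {z, a}} \<noteq> {{z, x}, {z, y}})"

definition separated_edges_pattern :: "nat \<Rightarrow> nat \<Rightarrow> nat \<Rightarrow> nat \<Rightarrow> nat \<Rightarrow> nat set set" where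
  "separated_edges_pattern a x1 x2 y1 y2 = {{x1, x2}, {y1, y2}, {a, x1}, {a, x2}, {a, y1}, {a, y2},
      {x1, y1}, {x1, y2}, {x2, y1}, {x2, y2}}"

definition separated_edges_event :: "nat \<Rightarrow> nat \<Rightarrow> nat \<Rightarrow> nat \<Rightarrow> nat \<Rightarrow> nat \<Rightarrow> nat set set \<Rightarrow> bool" where
  "separated_edges_event n a x1 x2 y1 y2 E \<longleftrightarrow>
     E \<inter> separated_edges_pattern a x1 x2 y1 y2 = {{x1, x2}, {y1, y2}} \<and>
     (\<forall>z\<in>{0..<n} - {a, x1, x2, y1, y2}. E \<inter> {{z, x1}, {z, y1}, {z, a}} \<noteq> {{z, x1}, {z, y1}})"

definition isolated_vertex_event :: "nat \<Rightarrow> nat \<Rightarrow> nat set set \<Rightarrow> bool" where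
  "isolated_vertex_event n v E \<longleftrightarrow> E \<inter> incident_edges v ({0..<n} - {v}) = {}"

definition leaf_event :: "nat \<Rightarrow> nat \<Rightarrow> nat \<Rightarrow> nat set set \<Rightarrow> bool" where
  "leaf_event n v u E \<longleftrightarrow> E \<inter> incident_edges v ({0..<n} - {v}) = {{v, u}}"

text \<open>\<open>{v}\<close> is a component of \<open>\<Gamma> \<setminus> st(a)\<close> although \<open>v\<close> has two neighbours \<open>u1\<close>, \<open>u2\<close>.\<close>

definition singleton_component_event :: "nat \<Rightarrow> nat \<Rightarrow> nat \<Rightarrow> nat \<Rightarrow> nat \<Rightarrow> nat set set \<Rightarrow> bool" where
  "singleton_component_event n a v u1 u2 E \<longleftrightarrow>
     E \<inter> {{v, u1}, {v, u2}, {a, u1}, {a, u2}, {v, a}} = {{v, u1}, {v, u2}, {a, u1}, {a, u2}} \<and>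
     (\<forall>w\<in>{0..<n} - {a, v, u1, u2}. E \<inter> {{w, v}, {w, a}} \<noteq> {{w, v}})"

text \<open>\<open>C\<close> is a union of components of \<open>\<Gamma> \<setminus> st(a)\<close>; in \<open>tree_component_event\<close> it is moreover
  spanned by the edge set \<open>T\<close>.\<close>

definition closed_set_event :: "nat \<Rightarrow> nat \<Rightarrow> nat set \<Rightarrow> nat set set \<Rightarrow> bool" where
  "closed_set_event n a C E \<longleftrightarrow> E \<inter> incident_edges a C = {} \<and>
     (\<forall>u\<in>{0..<n} - C - {a}. E \<inter> incident_edges u (insert a C) = {} \<or> {u, a} \<in> E)"

definition tree_component_event :: "nat \<Rightarrow> nat \<Rightarrow> nat set \<Rightarrow> nat set set \<Rightarrow> nat set set \<Rightarrow> bool" where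
  "tree_component_event n a C T E \<longleftrightarrow> E \<inter> (T \<union> incident_edges a C) = T \<and>
     (\<forall>u\<in>{0..<n} - C - {a}. E \<inter> incident_edges u (insert a C) = {} \<or> {u, a} \<in> E)"

lemma unreachable_pair_no_common_neighbour:
  assumes "x \<in> {0..<n} - star E a" "y \<in> {0..<n} - star E a"
    and "\<not> reach_in E ({0..<n} - star E a) x y" "z \<in> {0..<n} - {a, x, y}"
  shows "E \<inter> {{z, x}, {z, y}, {z, a}} \<noteq> {{z, x}, {z, y}}"
proof
  let ?S = "{0..<n} - star E a"
  assume eq: "E \<inter> {{z, x}, {z, y}, {z, a}} = {{z, x}, {z, y}}"
  have "a \<noteq> x" "a \<noteq> y"
    using assms(1,2) by (auto simp: star_def)
  then have "{z, a} \<notin> {{z, x}, {z, y}}"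
    by (auto simp: doubleton_eq_iff)
  then have "{z, a} \<notin> E \<inter> {{z, x}, {z, y}, {z, a}}"
    unfolding eq .
  moreover have "{z, x} \<in> E \<inter> {{z, x}, {z, y}, {z, a}}" "{z, y} \<in> E \<inter> {{z, x}, {z, y}, {z, a}}"
    unfolding eq by simp_all
  ultimately have "{z, x} \<in> E" "{z, y} \<in> E" "{z, a} \<notin> E"
    by blast+
  moreover from this have z: "z \<in> ?S"
    using assms(4) unfolding star_def by (auto simp: insert_commute)
  ultimately have "reach_in E ?S x z" "reach_in E ?S z y"
    using reach_in_step[OF assms(1) z] reach_in_step[OF z assms(2)] by (simp_all add: insert_commute)
  then show False
    using assms(3) reach_in_trans by metis
qed

lemma tree_component_imp_closed_set:
  assumes "a \<notin> C" "T \<subseteq> pairs_in C" "tree_component_event n a C T E"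
  shows "closed_set_event n a C E"
proof -
  have "T \<inter> incident_edges a C = {}"
    using assms(1,2) unfolding pairs_in_def incident_edges_def by (auto simp: doubleton_eq_iff)
  then show ?thesis
    using assms(3) unfolding tree_component_event_def closed_set_event_def by blast
qed

lemma star_cut_vertex_unlinked_pair:
  assumes "star_cut_vertex n E a"
  shows "\<exists>x\<in>{0..<n}. \<exists>y\<in>{0..<n}. distinct [a, x, y] \<and> unlinked_pair_event n a x y E"
proof -
  let ?S = "{0..<n} - star E a"
  obtain x y where xy: "x \<in> ?S" "y \<in> ?S" "\<not> reach_in E ?S x y"
    using assms unfolding star_cut_vertex_def connected_in_def by blast
  then have "x \<noteq> y" "{x, y} \<notin> E"
    using reach_in_refl reach_in_step by (metis, metis)
  moreover have "E \<inter> {{z, x}, {z, y}, {z, a}} \<noteq> {{z, x}, {z, y}}" if "z \<in> {0..<n} - {a, x, y}" for z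
    by (rule unreachable_pair_no_common_neighbour[OF xy that])
  ultimately have "distinct [a, x, y] \<and> unlinked_pair_event n a x y E"
    using xy unfolding unlinked_pair_event_def mem_off_star_iff by auto
  moreover have "x \<in> {0..<n}" "y \<in> {0..<n}"
    using xy by auto
  ultimately show ?thesis by blast
qed

lemma two_big_components_separated_edges:
  assumes E: "E \<subseteq> all_pairs n"
    and big: "\<not> at_most_one_big_component E ({0..<n} - star E a)"
  shows "\<exists>x1\<in>{0..<n}. \<exists>x2\<in>{0..<n}. \<exists>y1\<in>{0..<n}. \<exists>y2\<in>{0..<n}.
           distinct [a, x1, x2, y1, y2] \<and> separated_edges_event n a x1 x2 y1 y2 E"
proof -
  let ?S = "{0..<n} - star E a"
  obtain x y where xy: "x \<in> ?S" "y \<in> ?S" "card (component_in E ?S x) > 1"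
    "card (component_in E ?S y) > 1" "component_in E ?S x \<noteq> component_in E ?S y"
    using big unfolding at_most_one_big_component_def by blast
  have apart: "\<not> reach_in E ?S x y"
    using xy(5) component_in_eq by metis
  obtain x2 where x2: "x2 \<in> ?S" "{x, x2} \<in> E" "reach_in E ?S x x2"
    using component_in_neighbour[OF xy(1,3)] by blast
  obtain y2 where y2: "y2 \<in> ?S" "{y, y2} \<in> E" "reach_in E ?S y y2"
    using component_in_neighbour[OF xy(2,4)] by blast
  have "\<not> reach_in E ?S u w" if "reach_in E ?S x u" "reach_in E ?S y w" for u w
    using that apart reach_in_sym reach_in_trans by metis
  then have cross: "\<not> reach_in E ?S x y" "\<not> reach_in E ?S x y2" "\<not> reach_in E ?S x2 y"
      "\<not> reach_in E ?S x2 y2"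
    using x2(3) y2(3) reach_in_refl by blast+
  then have ne: "{x, y} \<notin> E" "{x, y2} \<notin> E" "{x2, y} \<notin> E" "{x2, y2} \<notin> E"
    using reach_in_step[of _ ?S _ E] xy(1,2) x2(1) y2(1) by blast+
  have "x \<noteq> y" "x \<noteq> y2" "x2 \<noteq> y" "x2 \<noteq> y2"
    using cross reach_in_refl by fastforce+
  moreover have "x \<noteq> x2" "y \<noteq> y2"
    using x2(2) y2(2) E singleton_notin_all_pairs by auto
  moreover have off: "x < n" "x2 < n" "y < n" "y2 < n" "x \<noteq> a" "x2 \<noteq> a" "y \<noteq> a" "y2 \<noteq> a"
      "{a, x} \<notin> E" "{a, x2} \<notin> E" "{a, y} \<notin> E" "{a, y2} \<notin> E"
    using xy(1,2) x2(1) y2(1) unfolding mem_off_star_iff by auto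
  moreover have "E \<inter> separated_edges_pattern a x x2 y y2 = {{x, x2}, {y, y2}}"
    unfolding separated_edges_pattern_def using x2(2) y2(2) ne off by auto
  moreover have "E \<inter> {{z, x}, {z, y}, {z, a}} \<noteq> {{z, x}, {z, y}}"
    if "z \<in> {0..<n} - {a, x, x2, y, y2}" for z
    by (rule unreachable_pair_no_common_neighbour[OF xy(1,2) apart]) (use that in auto)
  ultimately have "distinct [a, x, x2, y, y2] \<and> separated_edges_event n a x x2 y y2 E"
    unfolding separated_edges_event_def by auto
  moreover have "x \<in> {0..<n}" "x2 \<in> {0..<n}" "y \<in> {0..<n}" "y2 \<in> {0..<n}"
    using off by auto
  ultimately show ?thesis by blast
qed

lemma star_cut_vertex_small_component:
  assumes "star_cut_vertex n E a"
  obtains r where "r \<in> {0..<n} - star E a" "2 * card (component_in E ({0..<n} - star E a) r) \<le> n - 1"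
proof -
  let ?S = "{0..<n} - star E a"
  obtain x y where xy: "x \<in> ?S" "y \<in> ?S" "\<not> reach_in E ?S x y"
    using assms unfolding star_cut_vertex_def connected_in_def by blast
  let ?Cx = "component_in E ?S x" and ?Cy = "component_in E ?S y"
  have "?Cx \<inter> ?Cy = {}"
    using xy(3) reach_in_sym reach_in_trans unfolding component_in_def by blast
  moreover have "finite ?Cx" "finite ?Cy" "?Cx \<union> ?Cy \<subseteq> {0..<n} - {a}"
    using component_in_subset[of E ?S] by (auto simp: star_def intro: finite_subset)
  ultimately have "card ?Cx + card ?Cy \<le> card ({0..<n} - {a})"
    by (metis card_Un_disjoint card_mono finite_Diff finite_atLeastLessThan)
  also have "\<dots> \<le> n - 1"
    using assms by (simp add: star_cut_vertex_def)
  finally show ?thesis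
    using that xy(1,2) by (cases "card ?Cx \<le> card ?Cy") auto
qed

lemma off_star_component_closed:
  assumes "c \<in> component_in E ({0..<n} - star E a) r" "u < n" "u \<noteq> a" "{u, a} \<notin> E" "{u, c} \<in> E"
  shows "u \<in> component_in E ({0..<n} - star E a) r"
  by (rule component_in_closed[OF assms(1) _ assms(5)]) (use assms(2-4) in \<open>auto simp: star_def insert_commute\<close>)

lemma singleton_off_star_neighbour:
  assumes r: "r \<in> {0..<n} - star E a" and C: "component_in E ({0..<n} - star E a) r = {r}"
    and u: "{r, u} \<in> E" "u < n" "u \<noteq> r"
  shows "u \<noteq> a" "{u, a} \<in> E"
proof -
  show "u \<noteq> a"
    using u(1) r by (auto simp: star_def insert_commute)
  have "u \<notin> component_in E ({0..<n} - star E a) r"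
    using C u(3) by simp
  then show "{u, a} \<in> E"
    using off_star_component_closed[of r E n a r u] mem_component_in_self[OF r] u \<open>u \<noteq> a\<close>
    by (auto simp: insert_commute)
qed

lemma singleton_off_star_component:
  assumes E: "E \<subseteq> all_pairs n" and r: "r \<in> {0..<n} - star E a"
    and C: "component_in E ({0..<n} - star E a) r = {r}"
  shows "isolated_vertex_event n r E \<or> (\<exists>u\<in>{0..<n}. u \<noteq> r \<and> leaf_event n r u E)
    \<or> (\<exists>u1\<in>{0..<n}. \<exists>u2\<in>{0..<n}. distinct [a, r, u1, u2] \<and> singleton_component_event n a r u1 u2 E)"
proof -
  define N where "N = {u. {r, u} \<in> E}"
  have "r < n" "r \<noteq> a" "{a, r} \<notin> E"
    using r by (auto simp: star_def)
  then have rn: "r < n" "r \<noteq> a" "{r, a} \<notin> E"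
    by (simp_all add: insert_commute)
  have N_pair: "u < n" "u \<noteq> r" if "u \<in> N" for u
    using that E singleton_notin_all_pairs unfolding N_def by (auto simp: all_pairs_mem)
  have N_E: "E \<inter> incident_edges r ({0..<n} - {r}) = incident_edges r N"
    using N_pair unfolding N_def incident_edges_def by auto
  have N_star: "u \<noteq> a" "{u, a} \<in> E" if "u \<in> N" for u
    using singleton_off_star_neighbour[OF r C] that N_pair[OF that] unfolding N_def by auto
  consider "N = {}" | u where "N = {u}" | u1 u2 where "u1 \<in> N" "u2 \<in> N" "u1 \<noteq> u2"
    by blast
  then show ?thesis
  proof cases
    case 1
    then have "isolated_vertex_event n r E"
      unfolding isolated_vertex_event_def N_E by (simp add: incident_edges_def)
    then show ?thesis by blast
  next
    case (2 u)
    then have "leaf_event n r u E"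
      unfolding leaf_event_def N_E by (simp add: incident_edges_def)
    moreover have "u < n" "u \<noteq> r"
      using N_pair 2 by auto
    ultimately show ?thesis by auto
  next
    case (3 u1 u2)
    note u1 = N_pair[OF 3(1)] N_star[OF 3(1)] and u2 = N_pair[OF 3(2)] N_star[OF 3(2)]
    have edges: "E \<inter> {{r, u1}, {r, u2}, {a, u1}, {a, u2}, {r, a}} = {{r, u1}, {r, u2}, {a, u1}, {a, u2}}"
      using 3 u1(4) u2(4) rn(3) unfolding N_def by (auto simp: insert_commute)
    have trapped: "E \<inter> {{w, r}, {w, a}} \<noteq> {{w, r}}" if "w \<in> {0..<n} - {a, r, u1, u2}" for w
    proof
      assume eq: "E \<inter> {{w, r}, {w, a}} = {{w, r}}"
      then have "w \<in> N"
        unfolding N_def by (auto simp: insert_commute)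
      then have "{w, a} \<in> E \<inter> {{w, r}, {w, a}}"
        using N_star by simp
      then show False
        using eq rn(2) by (auto simp: doubleton_eq_iff)
    qed
    have "singleton_component_event n a r u1 u2 E"
      unfolding singleton_component_event_def using edges trapped by simp
    moreover have "distinct [a, r, u1, u2]"
      using 3(3) u1(2,3) u2(2,3) rn(2) by auto
    moreover have "u1 \<in> {0..<n}" "u2 \<in> {0..<n}"
      using u1(1) u2(1) by simp_all
    ultimately show ?thesis
      by blast
  qed
qed

lemma off_star_component_tree_event:
  assumes E: "E \<subseteq> all_pairs n" and r: "r \<in> {0..<n} - star E a"
  defines "C \<equiv> component_in E ({0..<n} - star E a) r"
  obtains T where "T \<subseteq> pairs_in C" "card T = card C - 1" "tree_component_event n a C T E"
proof -
  have loopfree: "{x} \<notin> E" for x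
    using E singleton_notin_all_pairs by blast
  obtain T where T: "T \<subseteq> E" "T \<subseteq> pairs_in C" "card T = card C - 1"
    using component_in_spanning_tree[OF r _ loopfree] unfolding C_def by auto
  have "{a, c} \<notin> E" if "c \<in> C" for c
  proof -
    have "c \<in> {0..<n} - star E a"
      using that component_in_subset unfolding C_def by blast
    then show ?thesis
      unfolding mem_off_star_iff by simp
  qed
  then have "E \<inter> (T \<union> incident_edges a C) = T"
    using T(1) unfolding incident_edges_def by auto
  moreover have "E \<inter> incident_edges u (insert a C) = {} \<or> {u, a} \<in> E"
    if u: "u \<in> {0..<n} - C - {a}" for u
  proof (rule disjCI)
    assume ua: "{u, a} \<notin> E"
    have "{u, c} \<notin> E" if "c \<in> C" for c
      using off_star_component_closed[of c E n a r u] that u ua unfolding C_def by auto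
    then show "E \<inter> incident_edges u (insert a C) = {}"
      using ua unfolding incident_edges_def by auto
  qed
  ultimately have "tree_component_event n a C T E"
    unfolding tree_component_event_def by blast
  then show ?thesis
    by (rule that[OF T(2,3)])
qed

lemma star_cut_vertex_sparse_witness:
  assumes E: "E \<subseteq> all_pairs n" and a: "star_cut_vertex n E a"
  shows "(\<exists>v\<in>{0..<n}. isolated_vertex_event n v E \<or> (\<exists>u\<in>{0..<n}. u \<noteq> v \<and> leaf_event n v u E))
    \<or> (\<exists>v\<in>{0..<n}. \<exists>u1\<in>{0..<n}. \<exists>u2\<in>{0..<n}.
          distinct [a, v, u1, u2] \<and> singleton_component_event n a v u1 u2 E)
    \<or> (\<exists>C. C \<subseteq> {0..<n} - {a} \<and> 2 \<le> card C \<and> 2 * card C \<le> n - 1 \<and>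
          (\<exists>T. T \<subseteq> pairs_in C \<and> card T = card C - 1 \<and> tree_component_event n a C T E))"
proof -
  let ?S = "{0..<n} - star E a"
  obtain r where r: "r \<in> ?S" and small: "2 * card (component_in E ?S r) \<le> n - 1"
    using star_cut_vertex_small_component[OF a] by blast
  define C where "C = component_in E ?S r"
  have "?S \<subseteq> {0..<n} - {a}"
    unfolding star_def by blast
  then have CS: "C \<subseteq> {0..<n} - {a}"
    unfolding C_def using component_in_subset by blast
  then have finC: "finite C"
    by (rule finite_subset) simp
  have rC: "r \<in> C"
    unfolding C_def using r by (rule mem_component_in_self)
  show ?thesis
  proof (cases "card C \<le> 1")
    case True
    then have "C = {r}"
      using finC rC by (auto simp: card_le_Suc0_iff_eq)
    then have "isolated_vertex_event n r E \<or> (\<exists>u\<in>{0..<n}. u \<noteq> r \<and> leaf_event n r u E)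
      \<or> (\<exists>u1\<in>{0..<n}. \<exists>u2\<in>{0..<n}. distinct [a, r, u1, u2] \<and> singleton_component_event n a r u1 u2 E)"
      using singleton_off_star_component[OF E r] unfolding C_def by blast
    moreover have "r \<in> {0..<n}"
      using r by simp
    ultimately show ?thesis
      by blast
  next
    case False
    obtain T where "T \<subseteq> pairs_in C" "card T = card C - 1" "tree_component_event n a C T E"
      using off_star_component_tree_event[OF E r] unfolding C_def by blast
    then show ?thesis
      using CS False small unfolding C_def by auto
  qed
qed

section \<open>Probabilities of the configurations\<close>

lemma card_incident_edges:
  assumes "u \<notin> X"
  shows "card (incident_edges u X) = card X"
proof -
  have "inj_on (\<lambda>x. {u, x}) X"
    by (auto simp: inj_on_def doubleton_eq_iff)
  then show ?thesis
    unfolding incident_edges_def by (rule card_image)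
qed

lemma incident_edges_subset_all_pairs:
  "u < n \<Longrightarrow> X \<subseteq> {0..<n} - {u} \<Longrightarrow> incident_edges u X \<subseteq> all_pairs n"
  unfolding incident_edges_def by (auto simp: all_pairs_mem)

lemma incident_edges_disjoint:
  "u \<noteq> v \<Longrightarrow> (v \<in> X \<Longrightarrow> u \<notin> Y) \<Longrightarrow> incident_edges u X \<inter> incident_edges v Y = {}"
  unfolding incident_edges_def by (auto simp: doubleton_eq_iff)

lemma pairs_in_Int_incident_edges: "u \<notin> C \<Longrightarrow> pairs_in C \<inter> incident_edges u X = {}"
  unfolding pairs_in_def incident_edges_def by (auto simp: doubleton_eq_iff)

lemma pairs_in_subset_all_pairs: "C \<subseteq> {0..<n} \<Longrightarrow> pairs_in C \<subseteq> all_pairs n"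
  unfolding pairs_in_def by (auto simp: all_pairs_mem subset_iff)

lemma finite_pairs_in: "finite C \<Longrightarrow> finite (pairs_in C)"
  unfolding pairs_in_def by (rule finite_subset[of _ "(\<lambda>(x, y). {x, y}) ` (C \<times> C)"]) auto

lemma card_pairs_in_le: "finite C \<Longrightarrow> card (pairs_in C) \<le> card C * card C"
proof -
  assume fin: "finite C"
  have "card (pairs_in C) \<le> card ((\<lambda>(x, y). {x, y}) ` (C \<times> C))"
    unfolding pairs_in_def by (rule card_mono) (use fin in auto)
  also have "\<dots> \<le> card (C \<times> C)"
    by (rule card_image_le) (use fin in simp)
  finally show ?thesis
    by (simp add: card_cartesian_product)
qed

lemma subset_prob_triangle_not_two:
  assumes "card {e1, e2, e3} = 3"
  shows "subset_prob p {e1, e2, e3} (\<lambda>F. F \<noteq> {e1, e2}) = 1 - p ^ 2 * (1 - p)"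
proof -
  have "card {e1, e2} = 2"
    using assms by (auto simp: card_insert_if split: if_splits)
  then show ?thesis
    using subset_prob_neq_set[of "{e1, e2, e3}" "{e1, e2}" p] assms by auto
qed

lemma prob_unlinked_pair_event:
  assumes "a < n" "x < n" "y < n" "distinct [a, x, y]"
  shows "gnp_prob n p (unlinked_pair_event n a x y) = (1 - p) ^ 3 * (1 - p ^ 2 * (1 - p)) ^ (n - 3)"
proof -
  let ?A = "{{a, x}, {a, y}, {x, y}}"
  let ?U = "{0..<n} - {a, x, y}"
  let ?B = "\<lambda>z. {{z, x}, {z, y}, {z, a}}"
  have cA: "card ?A = 3" and cU: "card ?U = n - 3"
    using assms by (auto simp: doubleton_eq_iff card_Diff_subset)
  have "gnp_prob n p (unlinked_pair_event n a x y) =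
      subset_prob p (all_pairs n) (\<lambda>E. E \<inter> ?A = {} \<and> (\<forall>z\<in>?U. (\<lambda>z F. F \<noteq> {{z, x}, {z, y}}) z (E \<inter> ?B z)))"
    unfolding gnp_prob_eq_subset_prob unlinked_pair_event_def by simp
  also have "\<dots> = p ^ card ({} :: nat set set) * (1 - p) ^ (card ?A - card ({} :: nat set set)) *
      (\<Prod>z\<in>?U. subset_prob p (?B z) (\<lambda>F. F \<noteq> {{z, x}, {z, y}}))"
    by (rule subset_prob_trace_and_blocks[OF finite_all_pairs])
      (use assms in \<open>auto simp: all_pairs_mem doubleton_eq_iff\<close>)
  also have "(\<Prod>z\<in>?U. subset_prob p (?B z) (\<lambda>F. F \<noteq> {{z, x}, {z, y}})) = (\<Prod>z\<in>?U. 1 - p ^ 2 * (1 - p))"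
    by (intro prod.cong refl subset_prob_triangle_not_two) (use assms in \<open>auto simp: doubleton_eq_iff\<close>)
  finally show ?thesis
    using cA cU by simp
qed

lemma prob_separated_edges_event:
  assumes "a < n" "x1 < n" "x2 < n" "y1 < n" "y2 < n" "distinct [a, x1, x2, y1, y2]"
  shows "gnp_prob n p (separated_edges_event n a x1 x2 y1 y2) =
    p ^ 2 * (1 - p) ^ 8 * (1 - p ^ 2 * (1 - p)) ^ (n - 5)"
proof -
  let ?A = "separated_edges_pattern a x1 x2 y1 y2"
  let ?X = "{{x1, x2}, {y1, y2}}"
  let ?U = "{0..<n} - {a, x1, x2, y1, y2}"
  let ?B = "\<lambda>z. {{z, x1}, {z, y1}, {z, a}}"
  have cA: "card ?A = 10" and cX: "card ?X = 2" and cU: "card ?U = n - 5"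
    using assms unfolding separated_edges_pattern_def by (auto simp: doubleton_eq_iff card_Diff_subset)
  have "gnp_prob n p (separated_edges_event n a x1 x2 y1 y2) =
      subset_prob p (all_pairs n) (\<lambda>E. E \<inter> ?A = ?X \<and> (\<forall>z\<in>?U. (\<lambda>z F. F \<noteq> {{z, x1}, {z, y1}}) z (E \<inter> ?B z)))"
    unfolding gnp_prob_eq_subset_prob separated_edges_event_def by simp
  also have "\<dots> = p ^ card ?X * (1 - p) ^ (card ?A - card ?X) *
      (\<Prod>z\<in>?U. subset_prob p (?B z) (\<lambda>F. F \<noteq> {{z, x1}, {z, y1}}))"
    by (rule subset_prob_trace_and_blocks[OF finite_all_pairs])
      (use assms in \<open>auto simp: separated_edges_pattern_def all_pairs_mem doubleton_eq_iff\<close>)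
  also have "(\<Prod>z\<in>?U. subset_prob p (?B z) (\<lambda>F. F \<noteq> {{z, x1}, {z, y1}})) = (\<Prod>z\<in>?U. 1 - p ^ 2 * (1 - p))"
    by (intro prod.cong refl subset_prob_triangle_not_two) (use assms in \<open>auto simp: doubleton_eq_iff\<close>)
  finally show ?thesis
    using cA cX cU by simp
qed

lemma prob_isolated_vertex_event:
  assumes "v < n"
  shows "gnp_prob n p (isolated_vertex_event n v) = (1 - p) ^ (n - 1)"
proof -
  let ?A = "incident_edges v ({0..<n} - {v})"
  have "gnp_prob n p (isolated_vertex_event n v) = p ^ card ({} :: nat set set) * (1 - p) ^ (card ?A - card ({} :: nat set set))"
    unfolding gnp_prob_eq_subset_prob isolated_vertex_event_def
    by (rule subset_prob_trace[OF finite_all_pairs]) (use assms incident_edges_subset_all_pairs in auto)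
  then show ?thesis
    using assms by (simp add: card_incident_edges)
qed

lemma prob_leaf_event:
  assumes "v < n" "u < n" "u \<noteq> v"
  shows "gnp_prob n p (leaf_event n v u) = p * (1 - p) ^ (n - 2)"
proof -
  let ?A = "incident_edges v ({0..<n} - {v})"
  have "gnp_prob n p (leaf_event n v u) = p ^ card {{v, u}} * (1 - p) ^ (card ?A - card {{v, u}})"
    unfolding gnp_prob_eq_subset_prob leaf_event_def
    by (rule subset_prob_trace[OF finite_all_pairs]) (use assms incident_edges_subset_all_pairs in \<open>auto simp: incident_edges_def\<close>)
  then show ?thesis
    using assms by (simp add: card_incident_edges diff_diff_add numeral_2_eq_2)
qed

lemma prob_singleton_component_event:
  assumes "a < n" "v < n" "u1 < n" "u2 < n" "distinct [a, v, u1, u2]"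
  shows "gnp_prob n p (singleton_component_event n a v u1 u2) = p ^ 4 * (1 - p) * (1 - p * (1 - p)) ^ (n - 4)"
proof -
  let ?A = "{{v, u1}, {v, u2}, {a, u1}, {a, u2}, {v, a}}"
  let ?X = "{{v, u1}, {v, u2}, {a, u1}, {a, u2}}"
  let ?U = "{0..<n} - {a, v, u1, u2}"
  let ?B = "\<lambda>w. {{w, v}, {w, a}}"
  have cA: "card ?A = 5" and cX: "card ?X = 4" and cU: "card ?U = n - 4"
    using assms by (auto simp: doubleton_eq_iff card_Diff_subset)
  have "gnp_prob n p (singleton_component_event n a v u1 u2) =
      subset_prob p (all_pairs n) (\<lambda>E. E \<inter> ?A = ?X \<and> (\<forall>w\<in>?U. (\<lambda>w F. F \<noteq> {{w, v}}) w (E \<inter> ?B w)))"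
    unfolding gnp_prob_eq_subset_prob singleton_component_event_def by simp
  also have "\<dots> = p ^ card ?X * (1 - p) ^ (card ?A - card ?X) * (\<Prod>w\<in>?U. subset_prob p (?B w) (\<lambda>F. F \<noteq> {{w, v}}))"
    by (rule subset_prob_trace_and_blocks[OF finite_all_pairs])
      (use assms in \<open>auto simp: all_pairs_mem doubleton_eq_iff\<close>)
  also have "(\<Prod>w\<in>?U. subset_prob p (?B w) (\<lambda>F. F \<noteq> {{w, v}})) = (\<Prod>w\<in>?U. 1 - p * (1 - p))"
  proof (rule prod.cong[OF refl])
    fix w assume "w \<in> ?U"
    then have "card (?B w) = 2"
      using assms by (auto simp: doubleton_eq_iff)
    then show "subset_prob p (?B w) (\<lambda>F. F \<noteq> {{w, v}}) = 1 - p * (1 - p)"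
      using subset_prob_neq_set[of "?B w" "{{w, v}}" p] by simp
  qed
  finally show ?thesis
    using cA cX cU by simp
qed

lemma subset_prob_incident_edges_avoid:
  assumes "finite C" "a \<notin> C" "u \<notin> insert a C"
  shows "subset_prob p (incident_edges u (insert a C)) (\<lambda>F. F = {} \<or> {u, a} \<in> F) = p + (1 - p) ^ (card C + 1)"
proof -
  let ?B = "incident_edges u (insert a C)"
  have fB: "finite ?B"
    using assms(1) by (simp add: incident_edges_def)
  have "card ?B = card (insert a C)"
    using assms(3) by (rule card_incident_edges)
  then have cB: "card ?B = card C + 1"
    using assms by simp
  have "subset_prob p ?B (\<lambda>F. F = {} \<or> {u, a} \<in> F) = subset_prob p ?B (\<lambda>F. F = {}) + subset_prob p ?B (\<lambda>F. {u, a} \<in> F)"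
    by (rule subset_prob_disj_disjoint) auto
  also have "subset_prob p ?B (\<lambda>F. F = {}) = (1 - p) ^ (card C + 1)"
    using subset_prob_eq_set[OF fB, of "{}" p] cB by simp
  also have "subset_prob p ?B (\<lambda>F. {u, a} \<in> F) = p"
    by (rule subset_prob_mem[OF fB]) (simp add: incident_edges_def)
  finally show ?thesis by simp
qed

text \<open>Both events below fix the trace of the graph on the edges inside \<open>C \<union> {a}\<close> and then ask,
  independently for every other vertex \<open>u\<close>, that \<open>u\<close> sees \<open>a\<close> or sees nothing of \<open>C \<union> {a}\<close>.\<close>

lemma prob_trace_and_avoid:
  assumes a: "a < n" and C: "C \<subseteq> {0..<n} - {a}" and T: "T \<subseteq> pairs_in C"
  shows "subset_prob p (all_pairs n) (\<lambda>E. E \<inter> (T \<union> incident_edges a C) = T \<and>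
      (\<forall>u\<in>{0..<n} - C - {a}. E \<inter> incident_edges u (insert a C) = {} \<or> {u, a} \<in> E)) =
    p ^ card T * (1 - p) ^ card C * (p + (1 - p) ^ (card C + 1)) ^ (n - 1 - card C)"
proof -
  let ?U = "{0..<n} - C - {a}" and ?A = "T \<union> incident_edges a C"
  let ?B = "\<lambda>u. incident_edges u (insert a C)"
  have fC: "finite C"
    using C finite_subset by blast
  have fT: "finite T"
    using T finite_pairs_in[OF fC] finite_subset by blast
  have disjT: "T \<inter> incident_edges a C = {}"
    using T pairs_in_Int_incident_edges C by blast
  have "card (incident_edges a C) = card C"
    using C by (intro card_incident_edges) auto
  then have cA: "card ?A - card T = card C"
    using card_Un_disjoint[OF fT _ disjT] fC by (simp add: incident_edges_def)
  have cU: "card ?U = n - 1 - card C"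
  proof -
    have "?U = ({0..<n} - {a}) - C" by auto
    then show ?thesis
      using a C fC by (simp add: card_Diff_subset)
  qed
  have "subset_prob p (all_pairs n) (\<lambda>E. E \<inter> ?A = T \<and> (\<forall>u\<in>?U. E \<inter> ?B u = {} \<or> {u, a} \<in> E)) =
      subset_prob p (all_pairs n) (\<lambda>E. E \<inter> ?A = T \<and> (\<forall>u\<in>?U. (\<lambda>u F. F = {} \<or> {u, a} \<in> F) u (E \<inter> ?B u)))"
    by (rule subset_prob_cong) (auto simp: incident_edges_def)
  also have "\<dots> = p ^ card T * (1 - p) ^ (card ?A - card T) *
      (\<Prod>u\<in>?U. subset_prob p (?B u) (\<lambda>F. F = {} \<or> {u, a} \<in> F))"
  proof (rule subset_prob_trace_and_blocks[OF finite_all_pairs])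
    show "?A \<subseteq> all_pairs n"
      using T C a pairs_in_subset_all_pairs[of C n] incident_edges_subset_all_pairs[of a n C] by blast
    show "?B u \<subseteq> all_pairs n" if "u \<in> ?U" for u
      using that C a by (intro incident_edges_subset_all_pairs) auto
    show "?A \<inter> ?B u = {}" if "u \<in> ?U" for u
      using that T pairs_in_Int_incident_edges[of u C] incident_edges_disjoint[of a u C "insert a C"] by auto
    show "?B u \<inter> ?B v = {}" if "u \<in> ?U" "v \<in> ?U" "u \<noteq> v" for u v
      using that by (intro incident_edges_disjoint) auto
  qed (use fC in auto)
  also have "(\<Prod>u\<in>?U. subset_prob p (?B u) (\<lambda>F. F = {} \<or> {u, a} \<in> F)) = (\<Prod>u\<in>?U. p + (1 - p) ^ (card C + 1))"
    by (intro prod.cong refl subset_prob_incident_edges_avoid fC) (use C in auto)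
  finally show ?thesis
    using cA cU by simp
qed

lemma prob_tree_component_event:
  assumes "a < n" "C \<subseteq> {0..<n} - {a}" "T \<subseteq> pairs_in C" "card T = card C - 1"
  shows "gnp_prob n p (tree_component_event n a C T) =
    p ^ (card C - 1) * (1 - p) ^ card C * (p + (1 - p) ^ (card C + 1)) ^ (n - 1 - card C)"
  using prob_trace_and_avoid[OF assms(1-3)] assms(4)
  unfolding gnp_prob_eq_subset_prob tree_component_event_def by simp

lemma prob_closed_set_event:
  assumes "a < n" "C \<subseteq> {0..<n} - {a}"
  shows "gnp_prob n p (closed_set_event n a C) =
    (1 - p) ^ card C * (p + (1 - p) ^ (card C + 1)) ^ (n - 1 - card C)"
  using prob_trace_and_avoid[OF assms, of "{}"]
  unfolding gnp_prob_eq_subset_prob closed_set_event_def by simp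

lemma card_edge_sets_le:
  assumes "finite C" "card C = k"
  shows "real (card {T. T \<subseteq> pairs_in C \<and> card T = k - 1}) \<le> real ((k * k) ^ (k - 1)) / fact (k - 1)"
proof -
  let ?m = "card (pairs_in C)"
  have "card {T. T \<subseteq> pairs_in C \<and> card T = k - 1} = ?m choose (k - 1)"
    by (rule n_subsets[OF finite_pairs_in[OF assms(1)]])
  moreover have "(?m choose (k - 1)) * fact (k - 1) \<le> ?m ^ (k - 1)"
    by (rule binomial_fact_pow)
  moreover have "?m ^ (k - 1) \<le> (k * k) ^ (k - 1)"
    using card_pairs_in_le[OF assms(1)] assms(2) by (intro power_mono) auto
  ultimately have "real (card {T. T \<subseteq> pairs_in C \<and> card T = k - 1}) * fact (k - 1) \<le> real ((k * k) ^ (k - 1))"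
    by (metis of_nat_fact of_nat_le_iff of_nat_mult order_trans)
  then show ?thesis
    by (simp add: field_simps)
qed

text \<open>A bound on the expected number of pairs \<open>(a, C)\<close>, \<open>|C| = k\<close>, with \<open>C\<close> a component of
  \<open>\<Gamma> \<setminus> st(a)\<close>: the first factor counts the choices of \<open>C\<close>, the minimum bounds the probability
  that \<open>C\<close> is connected (by a union bound over spanning trees, or trivially by 1).\<close>

definition component_bound :: "nat \<Rightarrow> real \<Rightarrow> nat \<Rightarrow> real" where
  "component_bound n p k = real ((n - 1) choose k) * min (real ((k * k) ^ (k - 1)) / fact (k - 1) * p ^ (k - 1)) 1 *
      ((1 - p) ^ k * (p + (1 - p) ^ (k + 1)) ^ (n - 1 - k))"

context
  fixes p :: real
  assumes p0: "0 \<le> p" and p1: "p \<le> 1"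
begin

lemma gnp_prob_nonneg: "0 \<le> gnp_prob n p P"
  unfolding gnp_prob_eq_subset_prob using p0 p1 by (rule subset_prob_nonneg)

lemma gnp_prob_mono:
  "(\<And>E. E \<subseteq> all_pairs n \<Longrightarrow> P E \<Longrightarrow> Q E) \<Longrightarrow> gnp_prob n p P \<le> gnp_prob n p Q"
  unfolding gnp_prob_eq_subset_prob using p0 p1 by (rule subset_prob_mono)

lemma gnp_prob_not: "gnp_prob n p (\<lambda>E. \<not> P E) = 1 - gnp_prob n p P"
  unfolding gnp_prob_eq_subset_prob using finite_all_pairs by (rule subset_prob_not)

lemma gnp_prob_Bex_vertices_le:
  "(\<And>x. x < n \<Longrightarrow> gnp_prob n p (P x) \<le> c) \<Longrightarrow> gnp_prob n p (\<lambda>E. \<exists>x\<in>{0..<n}. P x E) \<le> real n * c"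
  unfolding gnp_prob_eq_subset_prob using p0 p1 by (rule subset_prob_Bex_vertices_le)

lemma gnp_prob_conj_le:
  "(D \<Longrightarrow> gnp_prob n p P \<le> c) \<Longrightarrow> 0 \<le> c \<Longrightarrow> gnp_prob n p (\<lambda>E. D \<and> P E) \<le> c"
  unfolding gnp_prob_eq_subset_prob subset_prob_conj_const by auto

lemma prob_star_cut_vertex_le_dense:
  "gnp_prob n p (\<lambda>E. \<exists>a. star_cut_vertex n E a) \<le> real n ^ 3 * ((1 - p) ^ 3 * (1 - p ^ 2 * (1 - p)) ^ (n - 3))"
proof -
  let ?v = "(1 - p) ^ 3 * (1 - p ^ 2 * (1 - p)) ^ (n - 3)"
  have v0: "0 \<le> ?v"
    using p0 p1 by (intro mult_nonneg_nonneg zero_le_power) (auto simp: power2_eq_square mult_le_one)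
  have "gnp_prob n p (\<lambda>E. \<exists>a. star_cut_vertex n E a) \<le>
      gnp_prob n p (\<lambda>E. \<exists>a\<in>{0..<n}. \<exists>x\<in>{0..<n}. \<exists>y\<in>{0..<n}. distinct [a, x, y] \<and> unlinked_pair_event n a x y E)"
  proof (rule gnp_prob_mono)
    fix E assume "\<exists>a. star_cut_vertex n E a"
    then obtain a where a: "star_cut_vertex n E a" ..
    then have "a \<in> {0..<n}"
      unfolding star_cut_vertex_def by simp
    with star_cut_vertex_unlinked_pair[OF a]
    show "\<exists>a\<in>{0..<n}. \<exists>x\<in>{0..<n}. \<exists>y\<in>{0..<n}. distinct [a, x, y] \<and> unlinked_pair_event n a x y E"
      by blast
  qed
  also have "\<dots> \<le> real n * (real n * (real n * ?v))"
    by (intro gnp_prob_Bex_vertices_le gnp_prob_conj_le mult_nonneg_nonneg v0 of_nat_0_le_iff)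
      (simp add: prob_unlinked_pair_event)
  finally show ?thesis
    by (simp add: power3_eq_cube mult.assoc)
qed

lemma prob_two_big_components_le:
  "gnp_prob n p (\<lambda>E. \<exists>a. star_cut_vertex n E a \<and> \<not> at_most_one_big_component E ({0..<n} - star E a))
    \<le> real n ^ 5 * (p ^ 2 * (1 - p) ^ 8 * (1 - p ^ 2 * (1 - p)) ^ (n - 5))"
proof -
  let ?v = "p ^ 2 * (1 - p) ^ 8 * (1 - p ^ 2 * (1 - p)) ^ (n - 5)"
  have v0: "0 \<le> ?v"
    using p0 p1 by (intro mult_nonneg_nonneg zero_le_power) (auto simp: power2_eq_square mult_le_one)
  have "gnp_prob n p (\<lambda>E. \<exists>a. star_cut_vertex n E a \<and> \<not> at_most_one_big_component E ({0..<n} - star E a)) \<le>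
      gnp_prob n p (\<lambda>E. \<exists>a\<in>{0..<n}. \<exists>x1\<in>{0..<n}. \<exists>x2\<in>{0..<n}. \<exists>y1\<in>{0..<n}. \<exists>y2\<in>{0..<n}.
        distinct [a, x1, x2, y1, y2] \<and> separated_edges_event n a x1 x2 y1 y2 E)"
  proof (rule gnp_prob_mono)
    fix E assume E: "E \<subseteq> all_pairs n"
      and "\<exists>a. star_cut_vertex n E a \<and> \<not> at_most_one_big_component E ({0..<n} - star E a)"
    then obtain a where a: "star_cut_vertex n E a" "\<not> at_most_one_big_component E ({0..<n} - star E a)"
      by blast
    then have "a \<in> {0..<n}"
      unfolding star_cut_vertex_def by simp
    with two_big_components_separated_edges[OF E a(2)]
    show "\<exists>a\<in>{0..<n}. \<exists>x1\<in>{0..<n}. \<exists>x2\<in>{0..<n}. \<exists>y1\<in>{0..<n}. \<exists>y2\<in>{0..<n}.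
        distinct [a, x1, x2, y1, y2] \<and> separated_edges_event n a x1 x2 y1 y2 E"
      by blast
  qed
  also have "\<dots> \<le> real n * (real n * (real n * (real n * (real n * ?v))))"
    by (intro gnp_prob_Bex_vertices_le gnp_prob_conj_le mult_nonneg_nonneg v0 of_nat_0_le_iff)
      (simp add: prob_separated_edges_event)
  finally show ?thesis
    by (simp add: mult.assoc eval_nat_numeral)
qed

lemma prob_tree_component_set_le:
  assumes "a < n" "C \<subseteq> {0..<n} - {a}" "card C = k"
  shows "gnp_prob n p (\<lambda>E. \<exists>T\<in>{T. T \<subseteq> pairs_in C \<and> card T = k - 1}. tree_component_event n a C T E)
     \<le> min (real ((k * k) ^ (k - 1)) / fact (k - 1) * p ^ (k - 1)) 1 *
        ((1 - p) ^ k * (p + (1 - p) ^ (k + 1)) ^ (n - 1 - k))"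
proof -
  let ?R = "(1 - p) ^ k * (p + (1 - p) ^ (k + 1)) ^ (n - 1 - k)"
  let ?Ts = "{T. T \<subseteq> pairs_in C \<and> card T = k - 1}"
  let ?P = "\<lambda>E. \<exists>T\<in>?Ts. tree_component_event n a C T E"
  have fC: "finite C"
    using assms(2) finite_subset by blast
  have "gnp_prob n p ?P \<le> gnp_prob n p (closed_set_event n a C)"
    by (rule gnp_prob_mono) (use assms(2) tree_component_imp_closed_set in blast)
  also have "\<dots> = ?R"
    using prob_closed_set_event[OF assms(1,2)] assms(3) by simp
  finally have by_closed: "gnp_prob n p ?P \<le> ?R" .
  have "gnp_prob n p ?P \<le> real (card ?Ts) * (p ^ (k - 1) * ?R)"
    unfolding gnp_prob_eq_subset_prob
    by (rule subset_prob_Bex_le[OF p0 p1]) (use finite_pairs_in[OF fC] prob_tree_component_event[OF assms(1,2)] assms(3)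
        in \<open>auto simp: gnp_prob_eq_subset_prob\<close>)
  also have "\<dots> \<le> real ((k * k) ^ (k - 1)) / fact (k - 1) * (p ^ (k - 1) * ?R)"
    using card_edge_sets_le[OF fC assms(3)] p0 p1 by (intro mult_right_mono) auto
  finally have by_trees: "gnp_prob n p ?P \<le> real ((k * k) ^ (k - 1)) / fact (k - 1) * p ^ (k - 1) * ?R"
    by (simp add: mult.assoc)
  show ?thesis
    using by_closed by_trees by (simp add: min_def)
qed

lemma prob_isolated_or_leaf_le:
  "gnp_prob n p (\<lambda>E. \<exists>v\<in>{0..<n}. isolated_vertex_event n v E \<or> (\<exists>u\<in>{0..<n}. u \<noteq> v \<and> leaf_event n v u E))
    \<le> real n * ((1 - p) ^ (n - 1) + real n * (p * (1 - p) ^ (n - 2)))"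
proof (rule gnp_prob_Bex_vertices_le)
  fix v assume v: "v < n"
  have "gnp_prob n p (\<lambda>E. isolated_vertex_event n v E \<or> (\<exists>u\<in>{0..<n}. u \<noteq> v \<and> leaf_event n v u E)) \<le>
      gnp_prob n p (isolated_vertex_event n v) + gnp_prob n p (\<lambda>E. \<exists>u\<in>{0..<n}. u \<noteq> v \<and> leaf_event n v u E)"
    unfolding gnp_prob_eq_subset_prob using p0 p1 by (rule subset_prob_disj_le)
  also have "gnp_prob n p (\<lambda>E. \<exists>u\<in>{0..<n}. u \<noteq> v \<and> leaf_event n v u E) \<le> real n * (p * (1 - p) ^ (n - 2))"
    using p0 p1 v by (intro gnp_prob_Bex_vertices_le gnp_prob_conj_le) (auto simp: prob_leaf_event)
  finally show "gnp_prob n p (\<lambda>E. isolated_vertex_event n v E \<or> (\<exists>u\<in>{0..<n}. u \<noteq> v \<and> leaf_event n v u E))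
      \<le> (1 - p) ^ (n - 1) + real n * (p * (1 - p) ^ (n - 2))"
    using v by (simp add: prob_isolated_vertex_event)
qed

lemma prob_singleton_component_le:
  "gnp_prob n p (\<lambda>E. \<exists>a\<in>{0..<n}. \<exists>v\<in>{0..<n}. \<exists>u1\<in>{0..<n}. \<exists>u2\<in>{0..<n}.
      distinct [a, v, u1, u2] \<and> singleton_component_event n a v u1 u2 E)
    \<le> real n ^ 4 * (p ^ 4 * (1 - p) * (1 - p * (1 - p)) ^ (n - 4))"
proof -
  let ?v = "p ^ 4 * (1 - p) * (1 - p * (1 - p)) ^ (n - 4)"
  have "p * (1 - p) \<le> 1"
    using p0 p1 by (simp add: mult_le_one)
  then have v0: "0 \<le> ?v"
    using p0 p1 by simp
  have "gnp_prob n p (\<lambda>E. \<exists>a\<in>{0..<n}. \<exists>v\<in>{0..<n}. \<exists>u1\<in>{0..<n}. \<exists>u2\<in>{0..<n}.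
      distinct [a, v, u1, u2] \<and> singleton_component_event n a v u1 u2 E) \<le> real n * (real n * (real n * (real n * ?v)))"
    by (intro gnp_prob_Bex_vertices_le gnp_prob_conj_le mult_nonneg_nonneg v0 of_nat_0_le_iff)
      (simp add: prob_singleton_component_event)
  then show ?thesis
    by (simp add: mult.assoc eval_nat_numeral)
qed

lemma prob_tree_component_le:
  "gnp_prob n p (\<lambda>E. \<exists>a\<in>{0..<n}. \<exists>k\<in>{k. 2 \<le> k \<and> 2 * k \<le> n - 1}. \<exists>C\<in>{C. C \<subseteq> {0..<n} - {a} \<and> card C = k}.
      \<exists>T\<in>{T. T \<subseteq> pairs_in C \<and> card T = k - 1}. tree_component_event n a C T E)
    \<le> real n * (\<Sum>k | 2 \<le> k \<and> 2 * k \<le> n - 1. component_bound n p k)"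
proof (rule gnp_prob_Bex_vertices_le)
  fix a assume a: "a < n"
  let ?K = "{k. 2 \<le> k \<and> 2 * k \<le> n - 1}"
  let ?Cs = "\<lambda>k. {C. C \<subseteq> {0..<n} - {a} \<and> card C = k}"
  have "gnp_prob n p (\<lambda>E. \<exists>k\<in>?K. \<exists>C\<in>?Cs k. \<exists>T\<in>{T. T \<subseteq> pairs_in C \<and> card T = k - 1}. tree_component_event n a C T E)
      \<le> (\<Sum>k\<in>?K. gnp_prob n p (\<lambda>E. \<exists>C\<in>?Cs k. \<exists>T\<in>{T. T \<subseteq> pairs_in C \<and> card T = k - 1}. tree_component_event n a C T E))"
    unfolding gnp_prob_eq_subset_prob
    by (rule subset_prob_Bex_le_sum[OF p0 p1]) (rule finite_subset[of _ "{..n}"], auto)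
  also have "\<dots> \<le> (\<Sum>k\<in>?K. component_bound n p k)"
  proof (rule sum_mono)
    fix k
    have "card (?Cs k) = (n - 1) choose k"
      using n_subsets[of "{0..<n} - {a}" k] a by simp
    then show "gnp_prob n p (\<lambda>E. \<exists>C\<in>?Cs k. \<exists>T\<in>{T. T \<subseteq> pairs_in C \<and> card T = k - 1}. tree_component_event n a C T E)
        \<le> component_bound n p k"
      unfolding component_bound_def gnp_prob_eq_subset_prob
      using subset_prob_Bex_le[OF p0 p1, of "?Cs k" "all_pairs n"] prob_tree_component_set_le[OF a, of _ k]
      by (simp add: gnp_prob_eq_subset_prob mult.assoc)
  qed
  finally show "gnp_prob n p (\<lambda>E. \<exists>k\<in>?K. \<exists>C\<in>?Cs k. \<exists>T\<in>{T. T \<subseteq> pairs_in C \<and> card T = k - 1}.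
      tree_component_event n a C T E) \<le> (\<Sum>k\<in>?K. component_bound n p k)" .
qed

lemma prob_star_cut_vertex_le_sparse:
  "gnp_prob n p (\<lambda>E. \<exists>a. star_cut_vertex n E a) \<le>
     real n * ((1 - p) ^ (n - 1) + real n * (p * (1 - p) ^ (n - 2)))
   + real n ^ 4 * (p ^ 4 * (1 - p) * (1 - p * (1 - p)) ^ (n - 4))
   + real n * (\<Sum>k | 2 \<le> k \<and> 2 * k \<le> n - 1. component_bound n p k)"
proof -
  let ?V = "{0..<n}"
  define M where "M = (\<lambda>E. \<exists>v\<in>?V. isolated_vertex_event n v E \<or> (\<exists>u\<in>?V. u \<noteq> v \<and> leaf_event n v u E))"
  define K1 where "K1 = (\<lambda>E. \<exists>a\<in>?V. \<exists>v\<in>?V. \<exists>u1\<in>?V. \<exists>u2\<in>?V.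
      distinct [a, v, u1, u2] \<and> singleton_component_event n a v u1 u2 E)"
  define KK where "KK = (\<lambda>E. \<exists>a\<in>?V. \<exists>k\<in>{k. 2 \<le> k \<and> 2 * k \<le> n - 1}. \<exists>C\<in>{C. C \<subseteq> ?V - {a} \<and> card C = k}.
      \<exists>T\<in>{T. T \<subseteq> pairs_in C \<and> card T = k - 1}. tree_component_event n a C T E)"
  have "gnp_prob n p (\<lambda>E. \<exists>a. star_cut_vertex n E a) \<le> gnp_prob n p (\<lambda>E. M E \<or> (K1 E \<or> KK E))"
  proof (rule gnp_prob_mono)
    fix E assume E: "E \<subseteq> all_pairs n" and "\<exists>a. star_cut_vertex n E a"
    then obtain a where a: "star_cut_vertex n E a" by blast
    then have "a \<in> ?V"
      unfolding star_cut_vertex_def by simp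
    with star_cut_vertex_sparse_witness[OF E a] show "M E \<or> (K1 E \<or> KK E)"
      unfolding M_def K1_def KK_def by blast
  qed
  also have "\<dots> \<le> gnp_prob n p M + (gnp_prob n p K1 + gnp_prob n p KK)"
    using subset_prob_disj_le[OF p0 p1, of "all_pairs n" M "\<lambda>E. K1 E \<or> KK E"]
      subset_prob_disj_le[OF p0 p1, of "all_pairs n" K1 KK]
    unfolding gnp_prob_eq_subset_prob by simp
  also have "gnp_prob n p M \<le> real n * ((1 - p) ^ (n - 1) + real n * (p * (1 - p) ^ (n - 2)))"
    unfolding M_def by (rule prob_isolated_or_leaf_le)
  also have "gnp_prob n p K1 \<le> real n ^ 4 * (p ^ 4 * (1 - p) * (1 - p * (1 - p)) ^ (n - 4))"
    unfolding K1_def by (rule prob_singleton_component_le)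
  also have "gnp_prob n p KK \<le> real n * (\<Sum>k | 2 \<le> k \<and> 2 * k \<le> n - 1. component_bound n p k)"
    unfolding KK_def by (rule prob_tree_component_le)
  finally show ?thesis
    by simp
qed

end

section \<open>Elementary estimates\<close>

lemma one_minus_power_le_exp:
  fixes x :: real
  assumes "0 \<le> x" "x \<le> 1"
  shows "(1 - x) ^ m \<le> exp (- x * real m)"
proof -
  have "(1 - x) ^ m \<le> exp (- x) ^ m"
    using assms by (intro power_mono) (auto simp: exp_ge_add_one_self[of "-x", simplified])
  also have "\<dots> = exp (- x * real m)"
    using exp_of_nat_mult[of m "-x"] by (simp add: mult.commute)
  finally show ?thesis .
qed

lemma one_minus_power_le_quadratic:
  fixes p :: real
  assumes "0 \<le> p" "p \<le> 1"
  shows "(1 - p) ^ k \<le> 1 - real k * p + (real k * p) ^ 2 / 2"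
proof (induction k)
  case 0
  then show ?case by simp
next
  case (Suc k)
  have "(1 - p) ^ Suc k \<le> (1 - p) * (1 - real k * p + (real k * p) ^ 2 / 2)"
    using Suc assms by (simp add: mult_left_mono)
  also have "\<dots> \<le> 1 - real (Suc k) * p + (real (Suc k) * p) ^ 2 / 2"
  proof -
    have "0 \<le> (real k)^2 * p ^ 3"
      using assms by simp
    then show ?thesis
      by (simp add: algebra_simps power2_eq_square power3_eq_cube)
  qed
  finally show ?case .
qed

lemma power_div_fact_le_exp:
  fixes x :: real
  assumes "0 \<le> x"
  shows "x ^ k / fact k \<le> exp x"
proof -
  have "(\<Sum>n\<in>{k}. x ^ n / fact n) \<le> (\<Sum>n. x ^ n / fact n)"
    using summable_exp[of x] assms by (intro sum_le_suminf) (auto simp: divide_inverse mult.commute)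
  also have "\<dots> = exp x"
    using exp_converges[of x] by (simp add: sums_iff divide_inverse mult.commute)
  finally show ?thesis by simp
qed

lemma power_mult_exp_antimono:
  fixes t t0 c :: real
  assumes "t0 \<le> t" "0 < t0" "0 < c" "real k \<le> c * t0"
  shows "t ^ k * exp (- c * t) \<le> t0 ^ k * exp (- c * t0)"
proof -
  have "(t / t0) ^ k \<le> exp (t / t0 - 1) ^ k"
    using assms exp_ge_add_one_self[of "t / t0 - 1"] by (intro power_mono) auto
  also have "\<dots> = exp (real k / t0 * (t - t0))"
    using assms by (simp add: exp_of_nat_mult[symmetric] field_simps)
  also have "\<dots> \<le> exp (c * (t - t0))"
  proof -
    have "real k / t0 \<le> c"
      using assms by (simp add: divide_le_eq mult.commute)
    then have "real k / t0 * (t - t0) \<le> c * (t - t0)"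
      using assms by (intro mult_right_mono) auto
    then show ?thesis by simp
  qed
  finally have "t ^ k \<le> t0 ^ k * exp (c * (t - t0))"
    using assms by (simp add: power_divide divide_le_eq mult.commute)
  then have "t ^ k * exp (- c * t) \<le> t0 ^ k * exp (c * (t - t0)) * exp (- c * t)"
    by (intro mult_right_mono) auto
  also have "\<dots> = t0 ^ k * exp (- c * t0)"
    by (simp add: mult.assoc exp_add[symmetric] algebra_simps)
  finally show ?thesis .
qed

lemma power_mult_exp_le:
  fixes s c :: real
  assumes "0 \<le> s" "0 < c"
  shows "s ^ k * exp (- c * s) \<le> (real k / c) ^ k"
proof (cases "k = 0")
  case False
  have "c * s / real k \<le> exp (c * s / real k)"
    using exp_ge_add_one_self[of "c * s / real k"] by linarith
  then have "(c * s / real k) ^ k \<le> exp (c * s / real k) ^ k"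
    using assms by (intro power_mono) auto
  also have "\<dots> = exp (c * s)"
    using False by (simp add: exp_of_nat_mult[symmetric])
  finally have "s ^ k \<le> (real k / c) ^ k * exp (c * s)"
    using assms False by (simp add: power_divide field_simps)
  then have "s ^ k * exp (- c * s) \<le> (real k / c) ^ k * exp (c * s) * exp (- c * s)"
    by (intro mult_right_mono) auto
  then show ?thesis
    by (simp add: mult.assoc exp_add[symmetric])
qed (use assms in simp)

lemma power_mult_exp_quarter_le:
  fixes s :: real
  assumes "0 \<le> s"
  shows "s ^ k * exp (- s / 4) \<le> (4 * real k) ^ k"
  using power_mult_exp_le[OF assms, of "1/4" k] by (simp add: mult.commute)

lemma cube_mult_exp_le_min:
  fixes s :: real
  assumes "0 \<le> s"
  shows "s ^ 3 * exp (- s / 4) \<le> min (s ^ 3) (16 ^ 4 / s)"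
proof -
  have "s ^ 3 * exp (- s / 4) \<le> s ^ 3"
    using assms mult_left_mono[of "exp (- s / 4)" 1 "s ^ 3"] by simp
  moreover have "s ^ 3 * exp (- s / 4) \<le> 16 ^ 4 / s"
  proof (cases "s = 0")
    case False
    have "s * (s ^ 3 * exp (- s / 4)) \<le> 16 ^ 4"
      using power_mult_exp_quarter_le[OF assms, of 4] by (simp add: eval_nat_numeral mult.assoc)
    then show ?thesis
      using False assms by (simp add: field_simps)
  qed simp
  ultimately show ?thesis by simp
qed

lemma tree_count_le_exp:
  assumes "1 \<le> k"
  shows "real ((k * k) ^ (k - 1)) / fact (k - 1) / fact k \<le> exp (2 * real k)"
proof -
  obtain j where kj: "k = Suc j"
    using assms by (cases k) auto
  have "real ((k * k) ^ (k - 1)) = (real k * real k) ^ j"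
    unfolding kj diff_Suc_1 by (simp only: of_nat_power of_nat_mult)
  moreover have "(fact k :: real) = real k * fact j" "real k ^ k = real k * real k ^ j"
    unfolding kj by simp_all
  ultimately have "real ((k * k) ^ (k - 1)) / fact (k - 1) / fact k = (real k ^ k / fact k) ^ 2 / real k"
    using kj by (simp add: power_mult_distrib power2_eq_square)
  also have "\<dots> \<le> (real k ^ k / fact k) ^ 2"
    using assms by (simp add: divide_le_eq_1 field_simps)
  also have "\<dots> \<le> exp (real k) ^ 2"
    by (intro power_mono power_div_fact_le_exp) auto
  also have "\<dots> = exp (2 * real k)"
    by (simp add: exp_of_nat_mult[symmetric] mult.commute)
  finally show ?thesis .
qed

lemma component_bound_le_exp_power:
  assumes p: "0 < p" "p \<le> 1" and k: "1 \<le> k"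
  shows "real n * component_bound n p k \<le> real n / p * (exp 2 * (real n * p)) ^ k * (p + (1 - p) ^ (k + 1)) ^ (n - 1 - k)"
proof -
  define R where "R = (p + (1 - p) ^ (k + 1)) ^ (n - 1 - k)"
  define A where "A = real ((k * k) ^ (k - 1)) / fact (k - 1) * p ^ (k - 1)"
  define C where "C = real ((n - 1) choose k)"
  have R0: "0 \<le> R" unfolding R_def using p by simp
  have A0: "0 \<le> A" unfolding A_def using p by simp
  have C0: "0 \<le> C" unfolding C_def by simp
  have s1: "component_bound n p k \<le> C * A * R"
  proof -
    have "component_bound n p k = C * min A 1 * ((1 - p) ^ k * R)" unfolding component_bound_def A_def C_def R_def by simp
    moreover have "min A 1 * ((1 - p) ^ k * R) \<le> A * (1 * R)"
      using p R0 A0 by (intro mult_mono) (auto simp: power_le_one)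
    ultimately show ?thesis using C0 by (simp add: mult.assoc mult_left_mono)
  qed
  have s2: "C \<le> real n ^ k / fact k"
  proof -
    have "((n - 1) choose k) * fact k \<le> (n - 1) ^ k" by (rule binomial_fact_pow)
    also have "\<dots> \<le> n ^ k" by (intro power_mono) auto
    finally have "real ((n - 1) choose k) * fact k \<le> real n ^ k"
      by (metis of_nat_fact of_nat_le_iff of_nat_mult of_nat_power)
    then show ?thesis unfolding C_def by (simp add: field_simps)
  qed
  have s3: "real n ^ k / fact k * A \<le> real n ^ k * p ^ (k - 1) * exp (2 * real k)"
  proof -
    have "real n ^ k / fact k * A = real n ^ k * p ^ (k - 1) * (real ((k * k) ^ (k - 1)) / fact (k - 1) / fact k)"
      unfolding A_def by (simp add: field_simps)
    also have "\<dots> \<le> real n ^ k * p ^ (k - 1) * exp (2 * real k)"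
      using tree_count_le_exp[OF k] p by (intro mult_left_mono) auto
    finally show ?thesis .
  qed
  have s4: "real n ^ k * p ^ (k - 1) * exp (2 * real k) = (exp 2 * (real n * p)) ^ k / p"
  proof -
    have "p ^ (k - 1) = p ^ k / p" using p k by (simp add: power_eq_if)
    moreover have "exp (2 * real k) = exp 2 ^ k" by (simp add: exp_of_nat_mult[symmetric] mult.commute)
    ultimately show ?thesis by (simp add: power_mult_distrib)
  qed
  have "C * A * R \<le> real n ^ k / fact k * A * R" using s2 A0 R0 by (intro mult_right_mono) auto
  also have "\<dots> \<le> (exp 2 * (real n * p)) ^ k / p * R" using s3 s4 R0 by (intro mult_right_mono) auto
  finally have "component_bound n p k \<le> (exp 2 * (real n * p)) ^ k / p * R" using s1 by linarith
  then have "real n * component_bound n p k \<le> real n * ((exp 2 * (real n * p)) ^ k / p * R)"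
    by (intro mult_left_mono) auto
  then show ?thesis unfolding R_def by (simp add: field_simps)
qed

lemma component_bound_le_pow2:
  assumes p: "0 \<le> p" "p \<le> 1"
  shows "real n * component_bound n p k \<le> real n * 2 ^ (n - 1) * (p + (1 - p) ^ (k + 1)) ^ (n - 1 - k)"
proof -
  define R where "R = (p + (1 - p) ^ (k + 1)) ^ (n - 1 - k)"
  define A where "A = real ((k * k) ^ (k - 1)) / fact (k - 1) * p ^ (k - 1)"
  define C where "C = real ((n - 1) choose k)"
  have R0: "0 \<le> R" unfolding R_def using p by simp
  have A0: "0 \<le> A" unfolding A_def using p by simp
  have C0: "0 \<le> C" unfolding C_def by simp
  have C2: "C \<le> 2 ^ (n - 1)" unfolding C_def using binomial_le_pow2[of "n - 1" k]
    by (metis of_nat_le_iff of_nat_numeral of_nat_power)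
  have "component_bound n p k = C * min A 1 * ((1 - p) ^ k * R)" unfolding component_bound_def A_def C_def R_def by simp
  also have "\<dots> \<le> 2 ^ (n - 1) * 1 * (1 * R)"
    using p R0 A0 C0 C2 by (intro mult_mono) (auto simp: power_le_one)
  finally have K: "component_bound n p k \<le> 2 ^ (n - 1) * R" by simp
  show ?thesis using mult_left_mono[OF K, of "real n"] unfolding R_def by (simp add: mult.assoc)
qed

lemma avoid_factor_le_exp:
  assumes p: "0 \<le> p" "p \<le> 1"
  shows "(p + (1 - p) ^ (k + 1)) ^ m \<le> exp (- ((1 - p) * (1 - (1 - p) ^ k)) * real m)"
proof -
  have e: "p + (1 - p) ^ (k + 1) = 1 - (1 - p) * (1 - (1 - p) ^ k)" by (simp add: algebra_simps)
  have pk1: "(1 - p) ^ k \<le> 1" by (rule power_le_one) (use p in auto)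
  have pk0: "0 \<le> (1 - p) ^ k" using p by simp
  have x0: "0 \<le> (1 - p) * (1 - (1 - p) ^ k)" using p pk1 by simp
  have x1: "(1 - p) * (1 - (1 - p) ^ k) \<le> 1"
  proof -
    have "(1 - p) * (1 - (1 - p) ^ k) \<le> 1 * 1" using p pk0 pk1 by (intro mult_mono) auto
    then show ?thesis by simp
  qed
  show ?thesis unfolding e by (rule one_minus_power_le_exp[OF x0 x1])
qed

lemma isolated_or_leaf_term_le:
  assumes n2: "2 \<le> n" and p: "0 < p" "p \<le> 1" and L: "0 < L"
    and t0: "1 \<le> t0" "t0 \<le> real n * p" "t0 \<le> 2 * L"
    and et0: "exp (- t0) = 1 / (real n * L * exp w)"
  shows "real n * ((1 - p) ^ (n - 1) + real n * (p * (1 - p) ^ (n - 2))) \<le> 4 * exp 2 * exp (- w)"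
proof -
  define t where "t = real n * p"
  define Q where "Q = (1 - p) ^ (n - 2)"
  have Q0: "0 \<le> Q" unfolding Q_def using p by simp
  have a1: "(1 - p) ^ (n - 1) \<le> Q" unfolding Q_def using p n2 by (intro power_decreasing) auto
  have a2: "Q \<le> exp (- t) * exp 2"
  proof -
    have "Q \<le> exp (- p * real (n - 2))" unfolding Q_def using p by (intro one_minus_power_le_exp) auto
    also have "- p * real (n - 2) = - t + 2 * p" unfolding t_def using n2 by (simp add: of_nat_diff algebra_simps)
    also have "exp (- t + 2 * p) \<le> exp (- t + 2)" using p by simp
    finally have "Q \<le> exp (- t + 2)" .
    then show ?thesis using exp_add[of "- t" 2] by simp
  qed
  have t1: "1 \<le> t" using t0 unfolding t_def by simp
  have "real n * ((1 - p) ^ (n - 1) + real n * (p * Q)) \<le> real n * (Q + t * Q)"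
    using a1 unfolding t_def by (intro mult_left_mono) (auto simp: algebra_simps)
  also have "\<dots> = real n * (1 + t) * Q" by (simp add: algebra_simps)
  also have "\<dots> \<le> real n * (2 * t) * (exp (- t) * exp 2)"
    using a2 t1 Q0 by (intro mult_mono) auto
  also have "\<dots> = 2 * exp 2 * real n * (t ^ 1 * exp (- 1 * t))" by simp
  also have "\<dots> \<le> 2 * exp 2 * real n * (t0 ^ 1 * exp (- 1 * t0))"
    using power_mult_exp_antimono[of t0 t 1 1] t0 unfolding t_def by (intro mult_left_mono) auto
  also have "\<dots> = 2 * exp 2 * t0 / (L * exp w)" using et0 n2 by (simp add: field_simps)
  also have "\<dots> \<le> 2 * exp 2 * (2 * L) / (L * exp w)" using t0 L by (intro divide_right_mono mult_left_mono) auto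
  also have "\<dots> = 4 * exp 2 * exp (- w)" using L by (simp add: field_simps exp_minus)
  finally show ?thesis unfolding Q_def .
qed

lemma singleton_term_le:
  assumes n4: "4 \<le> n" and p: "0 < p" "p \<le> 1 / 2" and L: "8 \<le> L" "L \<le> real n * p"
  shows "real n ^ 4 * (p ^ 4 * (1 - p) * (1 - p * (1 - p)) ^ (n - 4)) \<le> exp 2 * L ^ 4 * exp (- L / 2)"
proof -
  define t where "t = real n * p"
  have x0: "0 \<le> p * (1 - p)" "p * (1 - p) \<le> 1" using p by (auto simp: mult_le_one)
  have "(1 - p * (1 - p)) ^ (n - 4) \<le> exp (- (p * (1 - p)) * real (n - 4))"
    by (rule one_minus_power_le_exp[OF x0])
  also have "\<dots> \<le> exp (- t / 2 + 2)"
  proof -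
    have pp: "p / 2 \<le> p * (1 - p)"
    proof -
      have "0 \<le> p * (1 / 2 - p)" using p by simp
      then show ?thesis by (simp add: algebra_simps)
    qed
    have A: "p * (1 - p) * real (n - 4) \<ge> p / 2 * real (n - 4)" using pp by (intro mult_right_mono) auto
    have B: "p / 2 * real (n - 4) = t / 2 - 2 * p" unfolding t_def using n4 by (simp add: of_nat_diff algebra_simps)
    have C: "- (p * (1 - p)) * real (n - 4) = - (p * (1 - p) * real (n - 4))" by simp
    show ?thesis unfolding exp_le_cancel_iff using A B C p by linarith
  qed
  finally have e1: "(1 - p * (1 - p)) ^ (n - 4) \<le> exp (- t / 2 + 2)" .
  have "real n ^ 4 * (p ^ 4 * (1 - p) * (1 - p * (1 - p)) ^ (n - 4)) \<le> real n ^ 4 * (p ^ 4 * 1 * exp (- t / 2 + 2))"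
    using p e1 x0 by (intro mult_left_mono mult_mono) auto
  also have "\<dots> = exp 2 * (t ^ 4 * exp (- (1/2) * t))"
  proof -
    have "exp (- t / 2 + 2) = exp 2 * exp (- (1/2) * t)" by (simp add: exp_add[symmetric] algebra_simps)
    then show ?thesis unfolding t_def by (simp add: power_mult_distrib algebra_simps)
  qed
  also have "\<dots> \<le> exp 2 * (L ^ 4 * exp (- (1/2) * L))"
    using power_mult_exp_antimono[of L t "1/2" 4] L unfolding t_def by (intro mult_left_mono) auto
  finally show ?thesis by simp
qed

section \<open>Components in the sparse regime\<close>

text \<open>Here \<open>L\<close> plays the role of \<open>ln n\<close> and \<open>\<tau>\<close> that of \<open>ln n + ln ln n + w\<close>, a lower bound for
  the expected degree \<open>n p\<close>; \<open>\<delta>\<close> absorbs the lower-order losses for components of size \<open>k \<le> n^{1/6}\<close>.\<close>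

context
  fixes n :: nat and p L \<tau> w \<delta> y :: real
  assumes n: "100 \<le> n" and p: "0 < p" "p \<le> real n powr (-1/3)" "real n powr (-1/3) \<le> 1/100"
    and L: "100 \<le> L" and \<tau>: "L \<le> \<tau>" "\<tau> \<le> real n * p" "\<tau> \<le> 2 * L"
    and et0: "exp (- \<tau>) = 1 / (real n * L * exp w)" and w: "0 \<le> w"
    and dl: "\<delta> = real n powr (-1/3) + real n powr (1/6) * real n powr (-1/3) / 2 + (real n powr (1/6) + 1) / real n"
      "\<delta> \<le> 1/2" "2 * L * \<delta> \<le> 1"
    and s60: "60 \<le> real n powr (1/6)"
    and y: "y = exp 3 * L * exp (- L / 12)" "y \<le> 1"
begin

lemma sparse_p_le: "p \<le> 1/100"
  using p by linarith

lemma sparse_k_bounds: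
  assumes k: "2 \<le> k" "2 * k \<le> n - 1"
  shows "real (n - 1 - k) = real n - 1 - real k" "2 * real k \<le> real n - 1"
proof -
  show "real (n - 1 - k) = real n - 1 - real k"
    using k by (simp add: of_nat_diff)
  have "real (2 * k) \<le> real (n - 1)"
    using k(2) by (simp only: of_nat_le_iff)
  then show "2 * real k \<le> real n - 1"
    using n by (simp add: of_nat_diff)
qed

lemma n_div_p_le: "real n / p \<le> real n ^ 2 / L"
proof -
  have "L / real n \<le> p"
    using \<tau> n by (simp add: field_simps)
  then have "real n / p \<le> real n / (L / real n)"
    using L n p by (intro divide_left_mono) auto
  then show ?thesis
    using L n by (simp add: power2_eq_square field_simps)
qed

lemma avoid_factor_sparse_le:
  "(p + (1 - p) ^ (k + 1)) ^ (n - 1 - k) \<le> exp (- ((1 - p) * (1 - (1 - p) ^ k)) * real (n - 1 - k))"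
  using p sparse_p_le by (intro avoid_factor_le_exp) auto

lemma one_minus_p_power_le: "(1 - p) ^ k \<le> exp (- (real k * p))"
  using one_minus_power_le_exp[of p k] p sparse_p_le by (simp add: mult.commute)

lemma avoid_exponent_ge_small_k:
  assumes k: "2 \<le> k" "2 * k \<le> n - 1"
    and a: "real k \<le> real n powr (1/6)"
  shows "real k * (real n * p) * (1 - \<delta>) \<le> (1 - p) * (1 - (1 - p) ^ k) * real (n - 1 - k)"
proof -
  define t where "t = real n * p"
  define q where "q = 1 - p"
  note p1 = sparse_p_le
  note rnk = sparse_k_bounds(1)[OF k]
  have q12: "1/2 \<le> q" "q \<le> 1"
    unfolding q_def using sparse_p_le p by auto
  have n0: "0 < real n"
    using n by simp
  have e1: "1 - q ^ k \<ge> real k * p * (1 - real k * p / 2)"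
    using one_minus_power_le_quadratic[of p k] p p1 unfolding q_def by (simp add: power2_eq_square algebra_simps)
  have e2: "q * (1 - q ^ k) \<ge> real k * p * (1 - p - real k * p / 2)"
  proof -
    have "q * (1 - q ^ k) \<ge> q * (real k * p * (1 - real k * p / 2))" using e1 q12 by (intro mult_left_mono) auto
    moreover have "q * (real k * p * (1 - real k * p / 2)) - real k * p * (1 - p - real k * p / 2)
        = real k * p * (p * (real k * p / 2))" unfolding q_def by (simp add: field_simps)
    moreover have "0 \<le> real k * p * (p * (real k * p / 2))" using p by simp
    ultimately show ?thesis by linarith
  qed
  have kp: "real k * p \<le> real n powr (1/6) * real n powr (-1/3)"
    using a p by (intro mult_mono) auto
  have k1n: "(real k + 1) / real n \<le> (real n powr (1/6) + 1) / real n"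
    using a n0 by (intro divide_right_mono) auto
  have aa: "1 - p - real k * p / 2 - (real k + 1) / real n \<ge> 1 - \<delta>"
    unfolding dl(1) using p kp k1n by linarith
  have e3: "(1 - p - real k * p / 2) * (real n - 1 - real k) \<ge> real n * (1 - \<delta>)"
  proof -
    have "(1 - p - real k * p / 2) * (real n - 1 - real k) =
          real n * (1 - p - real k * p / 2 - (real k + 1) / real n) + (p + real k * p / 2) * (real k + 1)"
      using n0 by (simp add: field_simps)
    moreover have "0 \<le> (p + real k * p / 2) * (real k + 1)" using p by simp
    moreover have "real n * (1 - p - real k * p / 2 - (real k + 1) / real n) \<ge> real n * (1 - \<delta>)"
      using aa n0 by (intro mult_left_mono) auto
    ultimately show ?thesis by linarith
  qed
  have "q * (1 - q ^ k) * real (n - 1 - k) \<ge> real k * t * (1 - \<delta>)"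
  proof -
    have "q * (1 - q ^ k) * real (n - 1 - k) \<ge> real k * p * (1 - p - real k * p / 2) * real (n - 1 - k)"
      using e2 by (intro mult_right_mono) auto
    moreover have "real k * p * (1 - p - real k * p / 2) * real (n - 1 - k) \<ge> real k * p * (real n * (1 - \<delta>))"
      using e3 p unfolding rnk by (simp add: mult.assoc mult_left_mono)
    ultimately show ?thesis unfolding t_def by (simp add: algebra_simps)
  qed
  then show ?thesis
    unfolding q_def t_def .
qed

lemma avoid_factor_le_small_k:
  assumes k: "2 \<le> k" "2 * k \<le> n - 1"
    and a: "real k \<le> real n powr (1/6)"
  shows "(p + (1 - p) ^ (k + 1)) ^ (n - 1 - k) \<le> exp (- (1 - \<delta>) * (real n * p)) ^ k"
proof -
  have "(p + (1 - p) ^ (k + 1)) ^ (n - 1 - k) \<le> exp (- ((1 - p) * (1 - (1 - p) ^ k)) * real (n - 1 - k))"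
    by (rule avoid_factor_sparse_le)
  also have "\<dots> \<le> exp (- (real k * (real n * p) * (1 - \<delta>)))"
    using avoid_exponent_ge_small_k[OF assms] by simp
  also have "\<dots> = exp (- (1 - \<delta>) * (real n * p)) ^ k"
    by (simp add: exp_of_nat_mult[symmetric] algebra_simps)
  finally show ?thesis .
qed

lemma growth_factor_le_small_k:
  "exp 2 * (real n * p) * exp (- (1 - \<delta>) * (real n * p)) \<le> 2 * exp 3 / real n"
proof -
  define t where "t = real n * p"
  have L0: "0 < L"
    using L by simp
  have n0: "0 < real n"
    using n by simp
  have tt: "t * exp (- (1 - \<delta>) * t) \<le> \<tau> * exp (- (1 - \<delta>) * \<tau>)"
  proof -
    have c0: "0 < 1 - \<delta>" using dl(2) by simp
    have "(1/2) * 100 \<le> (1 - \<delta>) * \<tau>" using dl(2) \<tau> L by (intro mult_mono) auto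
    then have c1: "real 1 \<le> (1 - \<delta>) * \<tau>" by simp
    have "\<tau> \<le> t" "0 < \<tau>" using \<tau> L unfolding t_def by auto
    from power_mult_exp_antimono[OF this c0 c1] show ?thesis by simp
  qed
  have t0e: "\<tau> * exp (- (1 - \<delta>) * \<tau>) \<le> 2 * exp 1 / real n"
  proof -
    have "\<tau> * exp (- (1 - \<delta>) * \<tau>) = \<tau> * exp (- \<tau>) * exp (\<delta> * \<tau>)" by (simp add: exp_add[symmetric] algebra_simps)
    also have "\<dots> \<le> \<tau> * exp (- \<tau>) * exp 1"
    proof -
      have "0 \<le> \<delta>" unfolding dl(1) by simp
      then have "\<delta> * \<tau> \<le> \<delta> * (2 * L)" using \<tau> by (intro mult_left_mono) auto
      then have "\<delta> * \<tau> \<le> 1" using dl by (simp add: algebra_simps)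
      then show ?thesis using \<tau> L by (intro mult_left_mono) auto
    qed
    also have "\<tau> * exp (- \<tau>) = \<tau> / (real n * L * exp w)" using et0 by simp
    also have "\<dots> \<le> 2 * L / (real n * L * 1)"
      using \<tau> L w n0 by (intro frac_le mult_left_mono mult_pos_pos) auto
    also have "\<dots> = 2 / real n" using L0 by simp
    finally show ?thesis by (simp add: field_simps)
  qed
  define x where "x = 2 * exp 3 / real n"
  have "exp 2 * t * exp (- (1 - \<delta>) * t) \<le> x"
  proof -
    have "exp 2 * t * exp (- (1 - \<delta>) * t) \<le> exp 2 * (2 * exp 1 / real n)"
    proof -
      have "t * exp (- (1 - \<delta>) * t) \<le> 2 * exp 1 / real n" using tt t0e by linarith
      then have "exp 2 * (t * exp (- (1 - \<delta>) * t)) \<le> exp 2 * (2 * exp 1 / real n)"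
        by (intro mult_left_mono) auto
      then show ?thesis by (simp add: mult.assoc)
    qed
    also have "\<dots> = x" unfolding x_def by (simp add: exp_add[symmetric] field_simps)
    finally show ?thesis .
  qed
  then show ?thesis
    unfolding t_def x_def .
qed

lemma component_term_le_small_k:
  assumes k: "2 \<le> k" "2 * k \<le> n - 1"
    and a: "real k \<le> real n powr (1/6)"
  shows "real n * component_bound n p k \<le> (if k = 2 then 4 * exp 6 / L else 0) + 8 * exp 9 / (real n * L)"
proof -
  define t where "t = real n * p"
  define R where "R = (p + (1 - p) ^ (k + 1)) ^ (n - 1 - k)"
  note p1 = sparse_p_le
  note npL = n_div_p_le
  have L0: "0 < L"
    using L by simp
  have n0: "0 < real n"
    using n by simp
  have t_nn: "0 \<le> t"
    unfolding t_def using p by simp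
  have KA: "real n * component_bound n p k \<le> real n / p * (exp 2 * t) ^ k * R"
    using component_bound_le_exp_power[of p k n] p p1 k unfolding t_def R_def by simp
  have R1: "R \<le> exp (- (1 - \<delta>) * t) ^ k"
    unfolding R_def t_def by (rule avoid_factor_le_small_k[OF k a])
  define x where "x = 2 * exp 3 / real n"
  have base: "exp 2 * t * exp (- (1 - \<delta>) * t) \<le> x"
    unfolding t_def x_def by (rule growth_factor_le_small_k)
  have x0: "0 \<le> x" unfolding x_def by simp
  have x1: "x \<le> 1"
  proof -
    have "exp (3::real) \<le> 50"
    proof -
      have "exp (1::real) \<le> 3" using exp_le by simp
      then have "exp (1::real) ^ 3 \<le> 3 ^ 3" by (intro power_mono) auto
      then show ?thesis by (simp add: exp_of_nat_mult[symmetric])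
    qed
    then show ?thesis unfolding x_def using n by (simp add: field_simps)
  qed
  have T1: "0 \<le> 8 * exp 9 / (real n * L)"
    using L0 n0 by simp
  have "real n * component_bound n p k \<le> real n / p * (exp 2 * t) ^ k * exp (- (1 - \<delta>) * t) ^ k"
    using KA R1 p t_nn by (elim order.trans) (intro mult_left_mono, auto)
  also have "\<dots> = real n / p * (exp 2 * t * exp (- (1 - \<delta>) * t)) ^ k" by (simp add: power_mult_distrib)
  also have "\<dots> \<le> real n ^ 2 / L * x ^ k"
    using npL base p \<tau> L by (intro mult_mono power_mono) (auto simp: t_def)
  also have "\<dots> \<le> (if k = 2 then 4 * exp 6 / L else 0) + 8 * exp 9 / (real n * L)"
  proof (cases "k = 2")
    case True
    have eq: "real n ^ 2 / L * x ^ 2 = 4 * exp 6 / L" unfolding x_def using n0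
      by (simp add: power2_eq_square field_simps exp_add[symmetric])
    have i: "(if k = 2 then 4 * exp 6 / L else 0) = 4 * exp 6 / L" using True by simp
    have eq2: "real n ^ 2 / L * x ^ k = 4 * exp 6 / L" using eq True by simp
    show ?thesis unfolding i eq2 using T1 by linarith
  next
    case False
    then have "x ^ k \<le> x ^ 3" using k x0 x1 by (intro power_decreasing) auto
    then have "real n ^ 2 / L * x ^ k \<le> real n ^ 2 / L * x ^ 3" using L0 by (intro mult_left_mono) auto
    also have "\<dots> = 8 * exp 9 / (real n * L)" unfolding x_def using n0 L0
      by (simp add: power3_eq_cube power2_eq_square field_simps exp_add[symmetric])
    finally have "real n ^ 2 / L * x ^ k \<le> 8 * exp 9 / (real n * L)" .
    moreover have i: "(if k = 2 then 4 * exp 6 / L else 0) = 0" using False by simp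
    ultimately show ?thesis unfolding i by simp
  qed
  finally show ?thesis .
qed

lemma avoid_exponent_ge_medium_k:
  assumes k: "2 \<le> k" "2 * k \<le> n - 1"
    and b: "real k * p \<le> 2"
  shows "real k * ((real n * p - 1) / 12) \<le> (1 - p) * (1 - (1 - p) ^ k) * real (n - 1 - k)"
proof -
  define t where "t = real n * p"
  define q where "q = 1 - p"
  note p1 = sparse_p_le
  note rnk = sparse_k_bounds(1)[OF k]
  note k2r = sparse_k_bounds(2)[OF k]
  have q12: "1/2 \<le> q" "q \<le> 1"
    unfolding q_def using sparse_p_le p by auto
  have qk_exp: "q ^ k \<le> exp (- (real k * p))"
    unfolding q_def by (rule one_minus_p_power_le)
  have f1: "1 - q ^ k \<ge> real k * p / 3"
  proof -
    have h: "exp (real k * p) \<ge> 1 + real k * p" by simp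
    have hpos: "0 < 1 + real k * p" using p by (simp add: add_pos_nonneg)
    have "1 / exp (real k * p) \<le> 1 / (1 + real k * p)"
    proof (rule divide_left_mono)
      have "0 < 1 + real k * p" using p by (simp add: add_pos_nonneg)
      then show "0 < exp (real k * p) * (1 + real k * p)" by simp
    qed (use h in auto)
    then have "exp (- (real k * p)) \<le> 1 / (1 + real k * p)" by (simp add: exp_minus')
    then have "1 - q ^ k \<ge> 1 - 1 / (1 + real k * p)" using qk_exp by linarith
    moreover have "1 - 1 / (1 + real k * p) = real k * p / (1 + real k * p)" using hpos
      by (simp add: field_simps)
    moreover have "real k * p / (1 + real k * p) \<ge> real k * p / 3" using b p hpos
      by (intro divide_left_mono) (auto simp: mult_pos_pos)
    ultimately show ?thesis by linarith
  qed
  have f2: "q * (1 - q ^ k) \<ge> real k * p / 6"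
  proof -
    have "q * (1 - q ^ k) \<ge> (1/2) * (real k * p / 3)" using f1 q12 p by (intro mult_mono) auto
    then show ?thesis by simp
  qed
    have f3: "real (n - 1 - k) \<ge> (real n - 1) / 2" unfolding rnk using k2r by (simp add: field_simps)
  have "q * (1 - q ^ k) * real (n - 1 - k) \<ge> real k * ((t - 1) / 12)"
  proof -
    have "q * (1 - q ^ k) * real (n - 1 - k) \<ge> real k * p / 6 * ((real n - 1) / 2)"
    proof (rule mult_mono)
      have "0 \<le> real k * p" using p by simp
      then show "0 \<le> q * (1 - q ^ k)" using f2 by linarith
    qed (use f2 f3 n in auto)
    moreover have "real k * p / 6 * ((real n - 1) / 2) = real k * ((t - p) / 12)" unfolding t_def by (simp add: algebra_simps)
    moreover have "real k * ((t - p) / 12) \<ge> real k * ((t - 1) / 12)" using p1 by (intro mult_left_mono) auto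
    ultimately show ?thesis by linarith
  qed
  then show ?thesis
    unfolding q_def t_def .
qed

lemma avoid_factor_le_medium_k:
  assumes k: "2 \<le> k" "2 * k \<le> n - 1"
    and b: "real k * p \<le> 2"
  shows "(p + (1 - p) ^ (k + 1)) ^ (n - 1 - k) \<le> exp (- ((real n * p - 1) / 12)) ^ k"
proof -
  have "(p + (1 - p) ^ (k + 1)) ^ (n - 1 - k) \<le> exp (- ((1 - p) * (1 - (1 - p) ^ k)) * real (n - 1 - k))"
    by (rule avoid_factor_sparse_le)
  also have "\<dots> \<le> exp (- (real k * ((real n * p - 1) / 12)))"
    using avoid_exponent_ge_medium_k[OF assms] by simp
  also have "\<dots> = exp (- ((real n * p - 1) / 12)) ^ k"
    by (simp add: exp_of_nat_mult[symmetric] algebra_simps)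
  finally show ?thesis .
qed

lemma component_term_le_medium_k:
  assumes k: "2 \<le> k" "2 * k \<le> n - 1"
    and b: "real n powr (1/6) < real k" "real k * p \<le> 2"
  shows "real n * component_bound n p k \<le> real n ^ 2 / L * y ^ 60"
proof -
  define t where "t = real n * p"
  define R where "R = (p + (1 - p) ^ (k + 1)) ^ (n - 1 - k)"
  note p1 = sparse_p_le
  note npL = n_div_p_le
  have L0: "0 < L"
    using L by simp
  have t_nn: "0 \<le> t"
    unfolding t_def using p by simp
  have KA: "real n * component_bound n p k \<le> real n / p * (exp 2 * t) ^ k * R"
    using component_bound_le_exp_power[of p k n] p p1 k unfolding t_def R_def by simp
  have R1: "R \<le> exp (- ((t - 1) / 12)) ^ k"
    unfolding R_def t_def by (rule avoid_factor_le_medium_k[OF k b(2)])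
  have y0: "0 \<le> y"
    unfolding y(1) using L by simp
  have tt: "t * exp (- (1/12) * t) \<le> L * exp (- (1/12) * L)"
    using power_mult_exp_antimono[of L t "1/12" 1] \<tau> L unfolding t_def by auto
  have base: "exp 2 * t * exp (- ((t - 1) / 12)) \<le> y"
  proof -
    have "exp 2 * t * exp (- ((t - 1) / 12)) = exp 2 * exp (1/12) * (t * exp (- (1/12) * t))"
      by (simp add: exp_add[symmetric] algebra_simps diff_divide_distrib)
    also have "\<dots> \<le> exp 2 * exp (1/12) * (L * exp (- (1/12) * L))"
      using tt by (intro mult_left_mono) auto
    also have "\<dots> \<le> exp 3 * (L * exp (- (1/12) * L))"
    proof -
      have "exp 2 * exp (1/12) = exp (2 + 1/12 :: real)" by (simp only: exp_add)
      also have "\<dots> \<le> exp 3" by simp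
      finally show ?thesis using L by (intro mult_right_mono) auto
    qed
    finally show ?thesis unfolding y(1) by (simp add: algebra_simps)
  qed
  have b0: "0 \<le> exp 2 * t * exp (- ((t - 1) / 12))" unfolding t_def using p by simp
  have k60: "60 \<le> k" using b s60 by linarith
  have "real n * component_bound n p k \<le> real n / p * (exp 2 * t) ^ k * exp (- ((t - 1) / 12)) ^ k"
    using KA R1 p t_nn by (elim order.trans) (intro mult_left_mono, auto)
  also have "\<dots> = real n / p * (exp 2 * t * exp (- ((t - 1) / 12))) ^ k" by (simp add: power_mult_distrib)
  also have "\<dots> \<le> real n ^ 2 / L * y ^ k"
    using npL base b0 p \<tau> L by (intro mult_mono power_mono) (auto simp: t_def)
  also have "\<dots> \<le> real n ^ 2 / L * y ^ 60"
    using k60 y0 y L0 by (intro mult_left_mono power_decreasing) auto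
  finally show ?thesis .
qed

lemma component_term_le_large_k:
  assumes k: "2 \<le> k" "2 * k \<le> n - 1"
    and c: "2 < real k * p"
  shows "real n * component_bound n p k \<le> real n * (21 / 25) powr ((real n - 1) / 2)"
proof -
  define q where "q = 1 - p"
  define R where "R = (p + (1 - p) ^ (k + 1)) ^ (n - 1 - k)"
  note p1 = sparse_p_le
  note rnk = sparse_k_bounds(1)[OF k]
  note k2r = sparse_k_bounds(2)[OF k]
  have qk_exp: "q ^ k \<le> exp (- (real k * p))"
    unfolding q_def by (rule one_minus_p_power_le)
  have KB: "real n * component_bound n p k \<le> real n * 2 ^ (n - 1) * R"
    using component_bound_le_pow2[of p n k] p p1 unfolding R_def by simp
  have KB: "real n * component_bound n p k \<le> real n * 2 ^ (n - 1) * R"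
    using component_bound_le_pow2[of p n k] p p1 unfolding R_def by simp
  have e2: "exp (- 2 :: real) \<le> 1 / 5"
  proof -
    have "(5::real) \<le> exp 2" using exp_lower_Taylor_quadratic[of 2] by simp
    then show ?thesis by (simp add: exp_minus field_simps)
  qed
  have g1: "(1 - p) ^ (k + 1) \<le> 1 / 5"
  proof -
    have "(1 - p) ^ (k + 1) \<le> (1 - p) ^ k" using p p1 by (intro power_decreasing) auto
    also have "\<dots> \<le> exp (- (real k * p))" using qk_exp unfolding q_def .
    also have "\<dots> \<le> exp (- 2)" using c by simp
    finally show ?thesis using e2 by linarith
  qed
  have g2: "p + (1 - p) ^ (k + 1) \<le> 21 / 100" using g1 p1 by linarith
  have g0: "0 \<le> p + (1 - p) ^ (k + 1)" using p p1 by simp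
  define z where "z = (real n - 1) / 2"
  have R1: "R \<le> (21 / 100) powr z"
  proof -
    have "R \<le> (21 / 100) ^ (n - 1 - k)" unfolding R_def using g0 g2 by (intro power_mono) auto
    also have "\<dots> = (21 / 100) powr real (n - 1 - k)" by (simp add: powr_realpow)
    also have "\<dots> \<le> (21 / 100) powr z"
    proof (rule powr_mono')
      show "z \<le> real (n - 1 - k)" unfolding z_def rnk using k2r by (simp add: field_simps)
    qed auto
    finally show ?thesis .
  qed
  have p2: "(2::real) ^ (n - 1) = 4 powr z"
  proof -
    have "(2::real) ^ (n - 1) = 2 powr real (n - 1)" by (simp add: powr_realpow)
    also have "\<dots> = (2 powr 2) powr z" unfolding z_def using n by (simp add: powr_powr of_nat_diff)
    also have "(2::real) powr 2 = 4" by simp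
    finally show ?thesis .
  qed
  have "real n * component_bound n p k \<le> real n * 2 ^ (n - 1) * (21 / 100) powr z"
    using KB R1 by (elim order.trans) (intro mult_left_mono, auto)
  also have "\<dots> = real n * (4 * (21 / 100)) powr z" unfolding p2 using powr_mult[of 4 "21/100" z] by simp
  also have "(4 * (21 / 100) :: real) = 21 / 25" by simp
  finally show ?thesis
    unfolding z_def .
qed

lemma component_term_le:
  assumes k: "2 \<le> k" "2 * k \<le> n - 1"
  shows "real n * component_bound n p k \<le> (if k = 2 then 4 * exp 6 / L else 0) + 8 * exp 9 / (real n * L)
      + real n ^ 2 / L * y ^ 60 + real n * (21 / 25) powr ((real n - 1) / 2)"
proof -
  have nonneg: "0 \<le> (if k = 2 then 4 * exp 6 / L else 0)" "0 \<le> 8 * exp 9 / (real n * L)"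
    "0 \<le> real n ^ 2 / L * y ^ 60" "0 \<le> real n * (21 / 25) powr ((real n - 1) / 2)"
    using L y by auto
  consider "real k \<le> real n powr (1/6)" | "real n powr (1/6) < real k" "real k * p \<le> 2" | "2 < real k * p"
    by linarith
  then show ?thesis
  proof cases
    case 1
    show ?thesis
      using component_term_le_small_k[OF k 1] nonneg by linarith
  next
    case 2
    show ?thesis
      using component_term_le_medium_k[OF k 2] nonneg by linarith
  next
    case 3
    show ?thesis
      using component_term_le_large_k[OF k 3] nonneg by linarith
  qed
qed

lemma component_sum_le:
  "real n * (\<Sum>k | 2 \<le> k \<and> 2 * k \<le> n - 1. component_bound n p k) \<le> 4 * exp 6 / L
     + real n * (8 * exp 9 / (real n * L) + real n ^ 2 / L * y ^ 60 + real n * (21 / 25) powr ((real n - 1) / 2))"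
proof -
  define K where "K = {k. 2 \<le> k \<and> 2 * k \<le> n - 1}"
  define c where "c = 8 * exp 9 / (real n * L) + real n ^ 2 / L * y ^ 60 + real n * (21 / 25) powr ((real n - 1) / 2)"
  have c0: "0 \<le> c"
    unfolding c_def y(1) using L by simp
  have "K \<subseteq> {..<n}"
    unfolding K_def by auto
  then have fK: "finite K" and cK: "card K \<le> n"
    using finite_subset card_mono[of "{..<n}" K] by auto
  have "real n * (\<Sum>k\<in>K. component_bound n p k) = (\<Sum>k\<in>K. real n * component_bound n p k)"
    by (simp add: sum_distrib_left)
  also have "\<dots> \<le> (\<Sum>k\<in>K. (if k = 2 then 4 * exp 6 / L else 0) + c)"
    by (rule sum_mono) (use component_term_le in \<open>simp add: K_def c_def add.assoc\<close>)
  also have "\<dots> = (\<Sum>k\<in>K. (if k = 2 then 4 * exp 6 / L else 0)) + real (card K) * c"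
    by (simp add: sum.distrib)
  also have "(\<Sum>k\<in>K. (if k = 2 then 4 * exp 6 / L else 0)) \<le> 4 * exp 6 / L"
    using sum.delta[OF fK, of 2 "\<lambda>_. 4 * exp 6 / L"] L by simp
  also have "real (card K) * c \<le> real n * c"
    using cK c0 by (intro mult_right_mono) auto
  finally show ?thesis
    unfolding K_def c_def by simp
qed

end

section \<open>Error bounds and the limit\<close>

definition sparse_error_bound :: "nat \<Rightarrow> real \<Rightarrow> real" where
  "sparse_error_bound n w = 4 * exp 2 * exp (- w) + exp 2 * ln (real n) ^ 4 * exp (- ln (real n) / 2)
     + 4 * exp 6 / ln (real n) + 8 * exp 9 / ln (real n)
     + real n ^ 3 / ln (real n) * (exp 3 * ln (real n) * exp (- ln (real n) / 12)) ^ 60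
     + real n ^ 2 * (21 / 25) powr ((real n - 1) / 2)"

definition sparse_slack :: "nat \<Rightarrow> real" where
  "sparse_slack n = real n powr (-1/3) + real n powr (1/6) * real n powr (-1/3) / 2 + (real n powr (1/6) + 1) / real n"

definition large_order :: "nat \<Rightarrow> bool" where
  "large_order n \<longleftrightarrow> 100 \<le> n \<and> 100 \<le> ln (real n) \<and> ln (ln (real n)) \<le> ln (real n) / 2
     \<and> real n powr (-1/3) \<le> 1/100 \<and> sparse_slack n \<le> 1/2 \<and> 2 * ln (real n) * sparse_slack n \<le> 1
     \<and> 60 \<le> real n powr (1/6) \<and> exp 3 * ln (real n) * exp (- ln (real n) / 12) \<le> 1"

lemma eventually_large_order: "\<forall>\<^sub>F n in sequentially. large_order n"
  unfolding large_order_def sparse_slack_def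
  by (intro eventually_conj eventually_ge_at_top) real_asymp+

lemma prob_star_cut_vertex_le_sparse_regime:
  assumes "large_order n"
    and w: "0 \<le> w" "w \<le> ln (ln (real n))"
    and p: "(ln (real n) + ln (ln (real n)) + w) / real n \<le> p" "p \<le> real n powr (-1/3)"
  shows "gnp_prob n p (\<lambda>E. \<exists>a. star_cut_vertex n E a) \<le> sparse_error_bound n w"
proof -
  have n: "100 \<le> n" and L: "100 \<le> ln (real n)" and LL: "ln (ln (real n)) \<le> ln (real n) / 2"
    and s: "real n powr (-1/3) \<le> 1/100"
    and d: "sparse_slack n \<le> 1/2" "2 * ln (real n) * sparse_slack n \<le> 1"
    and s60: "60 \<le> real n powr (1/6)" and y: "exp 3 * ln (real n) * exp (- ln (real n) / 12) \<le> 1"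
    using assms(1) unfolding large_order_def by auto
  define L where "L = ln (real n)"
  define t0 where "t0 = L + ln L + w"
  define yy where "yy = exp 3 * L * exp (- L / 12)"
  have n0: "0 < real n" using n by simp
  have L0: "0 < L" using L unfolding L_def by simp
  have lnL: "0 \<le> ln L" using L unfolding L_def by simp
  have t0L: "L \<le> t0" "t0 \<le> 2 * L" unfolding t0_def using lnL w LL unfolding L_def by auto
  have t0p: "t0 \<le> real n * p" using p(1) n0 unfolding t0_def L_def by (simp add: field_simps)
  have pp: "0 < p"
  proof -
    have "0 < t0" using t0L L0 by simp
    then have "0 < t0 / real n" using n0 by simp
    then show ?thesis using p(1) unfolding t0_def L_def by simp
  qed
  have p1: "p \<le> 1/100" using p s by linarith
  have et0: "exp (- t0) = 1 / (real n * L * exp w)"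
  proof -
    have "exp (- t0) = exp (- ln (real n)) * exp (- ln L) * exp (- w)"
      unfolding t0_def L_def by (simp add: exp_add[symmetric])
    also have "\<dots> = 1 / (real n * L * exp w)" using n0 L0 unfolding L_def by (simp add: exp_minus field_simps)
    finally show ?thesis .
  qed
  have M: "real n * ((1 - p) ^ (n - 1) + real n * (p * (1 - p) ^ (n - 2))) \<le> 4 * exp 2 * exp (- w)"
    by (rule isolated_or_leaf_term_le[OF _ pp _ L0 _ t0p _ et0]) (use n p1 t0L L in \<open>auto simp: L_def\<close>)
  have K1: "real n ^ 4 * (p ^ 4 * (1 - p) * (1 - p * (1 - p)) ^ (n - 4)) \<le> exp 2 * L ^ 4 * exp (- L / 2)"
    by (rule singleton_term_le) (use n pp p1 L t0L t0p in \<open>auto simp: L_def\<close>)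
  have KK: "real n * (\<Sum>k | 2 \<le> k \<and> 2 * k \<le> n - 1. component_bound n p k) \<le> 4 * exp 6 / L
     + real n * (8 * exp 9 / (real n * L) + real n ^ 2 / L * yy ^ 60 + real n * (21 / 25) powr ((real n - 1) / 2))"
  proof (rule component_sum_le[where p = p and L = L and \<tau> = t0 and w = w and \<delta> = "sparse_slack n" and y = yy])
    show "sparse_slack n \<le> 1/2" by (rule d(1))
    show "2 * L * sparse_slack n \<le> 1" using d(2) unfolding L_def .
    show "yy \<le> 1" using y unfolding yy_def L_def .
  qed (use n pp p(2) s L t0L t0p et0 w s60 in \<open>auto simp: sparse_slack_def yy_def L_def\<close>)
  have "gnp_prob n p (\<lambda>E. \<exists>a. star_cut_vertex n E a) \<le>
     real n * ((1 - p) ^ (n - 1) + real n * (p * (1 - p) ^ (n - 2)))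
   + real n ^ 4 * (p ^ 4 * (1 - p) * (1 - p * (1 - p)) ^ (n - 4))
   + real n * (\<Sum>k | 2 \<le> k \<and> 2 * k \<le> n - 1. component_bound n p k)"
    using prob_star_cut_vertex_le_sparse[of p n] pp p1 by simp
  also have "\<dots> \<le> 4 * exp 2 * exp (- w) + exp 2 * L ^ 4 * exp (- L / 2) + (4 * exp 6 / L
     + real n * (8 * exp 9 / (real n * L) + real n ^ 2 / L * yy ^ 60 + real n * (21 / 25) powr ((real n - 1) / 2)))"
    using M K1 KK by linarith
  also have "\<dots> = sparse_error_bound n w"
    unfolding sparse_error_bound_def yy_def L_def using n0 L0[unfolded L_def]
    by (simp add: field_simps power2_eq_square power3_eq_cube)
  finally show ?thesis .
qed

definition two_components_error_bound :: "nat \<Rightarrow> real" where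
  "two_components_error_bound n = exp 2 * 32 ^ 8 / real n ^ 3 + exp 3 * real n ^ 5 * exp (- (real n powr (1/3)) / 2)"

definition dense_error_bound :: "nat \<Rightarrow> real \<Rightarrow> real" where
  "dense_error_bound n s = exp 1 * min (s ^ 3) (16 ^ 4 / s) + exp 3 * real n ^ 3 * exp (- (real n powr (1/3)) / 2)"

lemma triangle_factor_le_small_p:
  assumes n: "j \<le> n" "j \<le> 5" "0 < n" and p: "real n powr (-1/3) < p" "p < 1/2"
  shows "(1 - p ^ 2 * (1 - p)) ^ (n - j) \<le> exp 3 * exp (- (real n powr (1/3)) / 2)"
proof -
  have n0: "0 < real n" using n by simp
  have p0: "0 < p" using p(1) powr_ge_zero[of "real n" "-1/3"] by linarith
  have pp1: "p ^ 2 \<le> 1" using p p0 by (intro power_le_one) auto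
  have x0: "0 \<le> p ^ 2 * (1 - p)" "p ^ 2 * (1 - p) \<le> 1" using p p0 pp1
    by (auto intro!: mult_le_one)
  have "(1 - p ^ 2 * (1 - p)) ^ (n - j) \<le> exp (- (p ^ 2 * (1 - p)) * real (n - j))"
    by (rule one_minus_power_le_exp[OF x0])
  also have "\<dots> \<le> exp (- (real n powr (-2/3) / 2 * (real n - 5)))"
  proof -
    have "(real n powr (-1/3)) ^ 2 \<le> p ^ 2" using p by (intro power_mono) auto
    moreover have "(real n powr (-1/3)) ^ 2 = real n powr (-2/3)"
      by (simp add: power2_eq_square powr_add[symmetric])
    ultimately have a: "real n powr (-2/3) / 2 \<le> p ^ 2 * (1 - p)"
    proof -
      assume "(real n powr (-1/3)) ^ 2 \<le> p ^ 2" "(real n powr (-1/3)) ^ 2 = real n powr (-2/3)"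
      then have "real n powr (-2/3) \<le> p ^ 2" by simp
      moreover have "p ^ 2 / 2 \<le> p ^ 2 * (1 - p)" using p p0 by (simp add: field_simps)
      ultimately show ?thesis by linarith
    qed
    have b: "real n - 5 \<le> real (n - j)" using n by (simp add: of_nat_diff)
    have "real n powr (-2/3) / 2 * (real n - 5) \<le> p ^ 2 * (1 - p) * real (n - j)"
    proof (cases "real n - 5 \<le> 0")
      case True
      then have "real n powr (-2/3) / 2 * (real n - 5) \<le> 0" by (simp add: mult_nonneg_nonpos)
      also have "0 \<le> p ^ 2 * (1 - p) * real (n - j)" using x0 by simp
      finally show ?thesis .
    next
      case False
      then show ?thesis using a b x0 by (intro mult_mono) auto
    qed
    then show ?thesis by simp
  qed
  also have "\<dots> \<le> exp (5 / 2 - (real n powr (1/3)) / 2)"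
  proof -
    have "real n powr (-2/3) * real n = real n powr (1/3)"
      using n0 powr_add[of "real n" "-2/3" 1] by simp
    moreover have "real n powr (-2/3) \<le> 1" using powr_mono[of "-2/3" 0 "real n"] n by simp
    ultimately have "real n powr (-2/3) / 2 * (real n - 5) \<ge> (real n powr (1/3)) / 2 - 5 / 2"
      by (simp add: algebra_simps)
    then show ?thesis by simp
  qed
  also have "\<dots> \<le> exp 3 * exp (- (real n powr (1/3)) / 2)"
    by (simp add: exp_add[symmetric])
  finally show ?thesis .
qed

lemma triangle_factor_le_big_p:
  assumes n: "j \<le> n" and p: "1/2 \<le> p" "p \<le> 1"
  shows "(1 - p ^ 2 * (1 - p)) ^ (n - j) \<le> exp (real j / 4) * exp (- (real n * (1 - p)) / 4)"
proof -
  have x0: "0 \<le> p ^ 2 * (1 - p)" "p ^ 2 * (1 - p) \<le> 1" using p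
    by (auto intro!: mult_le_one power_le_one)
  have "(1 - p ^ 2 * (1 - p)) ^ (n - j) \<le> exp (- (p ^ 2 * (1 - p)) * real (n - j))"
    by (rule one_minus_power_le_exp[OF x0])
  also have "\<dots> \<le> exp (- ((1 - p) / 4 * real (n - j)))"
  proof -
    have "(1/2)^2 \<le> p ^ 2" using p by (intro power_mono) auto
    then have a: "1/4 \<le> p ^ 2" by (simp add: power2_eq_square)
    have "1/4 * (1 - p) \<le> p ^ 2 * (1 - p)" using a p by (intro mult_right_mono) auto
    then have "(1 - p) / 4 \<le> p ^ 2 * (1 - p)" by simp
    then have "(1 - p) / 4 * real (n - j) \<le> p ^ 2 * (1 - p) * real (n - j)" by (intro mult_right_mono) auto
    then show ?thesis by simp
  qed
  also have "\<dots> = exp (real j * (1 - p) / 4) * exp (- (real n * (1 - p)) / 4)"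
    using n by (simp add: exp_add[symmetric] of_nat_diff algebra_simps diff_divide_distrib)
  also have "\<dots> \<le> exp (real j / 4) * exp (- (real n * (1 - p)) / 4)"
  proof -
    have "real j * (1 - p) \<le> real j * 1" using p by (intro mult_left_mono) auto
    then show ?thesis by simp
  qed
  finally show ?thesis .
qed

lemma prob_two_big_components_le_dense_regime:
  assumes n: "6 \<le> n" and p: "0 \<le> p" "p \<le> 1" "real n powr (-1/3) < p"
  shows "gnp_prob n p (\<lambda>E. \<exists>a. star_cut_vertex n E a \<and> \<not> at_most_one_big_component E ({0..<n} - star E a)) \<le> two_components_error_bound n"
proof -
  have n0: "0 < real n" using n by simp
  have T1: "0 \<le> exp 2 * 32 ^ 8 / real n ^ 3" by simp
  have T2: "0 \<le> exp 3 * real n ^ 5 * exp (- (real n powr (1/3)) / 2)" by simp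
  have q: "0 \<le> 1 - p" "1 - p \<le> 1" using p by auto
  have bb: "0 \<le> (1 - p ^ 2 * (1 - p)) ^ (n - 5)"
  proof -
    have "p ^ 2 * (1 - p) \<le> 1" using p by (auto intro!: mult_le_one power_le_one)
    then show ?thesis by simp
  qed
  have "gnp_prob n p (\<lambda>E. \<exists>a. star_cut_vertex n E a \<and> \<not> at_most_one_big_component E ({0..<n} - star E a))
     \<le> real n ^ 5 * (p ^ 2 * (1 - p) ^ 8 * (1 - p ^ 2 * (1 - p)) ^ (n - 5))"
    by (rule prob_two_big_components_le[OF p(1,2)])
  also have "\<dots> \<le> two_components_error_bound n"
  proof (cases "1/2 \<le> p")
    case True
    define s where "s = real n * (1 - p)"
    have s0: "0 \<le> s" unfolding s_def using q by simp
    have "real n ^ 5 * (p ^ 2 * (1 - p) ^ 8 * (1 - p ^ 2 * (1 - p)) ^ (n - 5))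
        \<le> real n ^ 5 * (1 * (1 - p) ^ 8 * (exp (real 5 / 4) * exp (- s / 4)))"
      using triangle_factor_le_big_p[of 5 n p] True p n q bb unfolding s_def
      by (intro mult_left_mono mult_mono) (auto intro!: power_le_one)
    also have "\<dots> = exp (5 / 4) * (s ^ 8 * exp (- s / 4)) / real n ^ 3"
      unfolding s_def using n0 by (simp add: power_mult_distrib field_simps eval_nat_numeral)
    also have "\<dots> \<le> exp 2 * 32 ^ 8 / real n ^ 3"
    proof -
      have "exp (5 / 4) * (s ^ 8 * exp (- s / 4)) \<le> exp 2 * 32 ^ 8"
        using power_mult_exp_quarter_le[OF s0, of 8] by (intro mult_mono) auto
      then show ?thesis using n0 by (intro divide_right_mono) auto
    qed
    finally show ?thesis unfolding two_components_error_bound_def using T2 by linarith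
  next
    case False
    have "real n ^ 5 * (p ^ 2 * (1 - p) ^ 8 * (1 - p ^ 2 * (1 - p)) ^ (n - 5))
        \<le> real n ^ 5 * (1 * 1 * (exp 3 * exp (- (real n powr (1/3)) / 2)))"
    proof (intro mult_left_mono mult_mono)
      show "(1 - p ^ 2 * (1 - p)) ^ (n - 5) \<le> exp 3 * exp (- (real n powr (1/3)) / 2)"
        using triangle_factor_le_small_p[of 5 n p] n p False by simp
    qed (use p q bb in \<open>auto intro!: power_le_one mult_le_one\<close>)
    then have "real n ^ 5 * (p ^ 2 * (1 - p) ^ 8 * (1 - p ^ 2 * (1 - p)) ^ (n - 5))
        \<le> exp 3 * real n ^ 5 * exp (- (real n powr (1/3)) / 2)" by (simp add: algebra_simps)
    then show ?thesis unfolding two_components_error_bound_def using T1 by linarith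
  qed
  finally show ?thesis .
qed

lemma prob_star_cut_vertex_le_dense_regime:
  assumes n: "6 \<le> n" and p: "0 \<le> p" "p \<le> 1" "real n powr (-1/3) < p"
  shows "gnp_prob n p (\<lambda>E. \<exists>a. star_cut_vertex n E a) \<le> dense_error_bound n (real n * (1 - p))"
proof -
  define s where "s = real n * (1 - p)"
  have T1: "0 \<le> exp 1 * min (s ^ 3) (16 ^ 4 / s)" unfolding s_def using p by simp
  have T2: "0 \<le> exp 3 * real n ^ 3 * exp (- (real n powr (1/3)) / 2)" by simp
  have q: "0 \<le> 1 - p" "1 - p \<le> 1" using p by auto
  have bb: "0 \<le> (1 - p ^ 2 * (1 - p)) ^ (n - 3)"
  proof -
    have "p ^ 2 * (1 - p) \<le> 1" using p by (auto intro!: mult_le_one power_le_one)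
    then show ?thesis by simp
  qed
  have "gnp_prob n p (\<lambda>E. \<exists>a. star_cut_vertex n E a)
     \<le> real n ^ 3 * ((1 - p) ^ 3 * (1 - p ^ 2 * (1 - p)) ^ (n - 3))"
    by (rule prob_star_cut_vertex_le_dense[OF p(1,2)])
  also have "\<dots> \<le> dense_error_bound n s"
  proof (cases "1/2 \<le> p")
    case True
    have s0: "0 \<le> s" unfolding s_def using q by simp
    have "real n ^ 3 * ((1 - p) ^ 3 * (1 - p ^ 2 * (1 - p)) ^ (n - 3))
        \<le> real n ^ 3 * ((1 - p) ^ 3 * (exp (real 3 / 4) * exp (- s / 4)))"
      using triangle_factor_le_big_p[of 3 n p] True p n q bb unfolding s_def
      by (intro mult_left_mono mult_mono) auto
    also have "\<dots> = exp (3 / 4) * (s ^ 3 * exp (- s / 4))"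
      unfolding s_def power_mult_distrib by (simp add: algebra_simps)
    also have "\<dots> \<le> exp 1 * min (s ^ 3) (16 ^ 4 / s)"
    proof (rule mult_mono)
      show "0 \<le> s ^ 3 * exp (- s / 4)" using s0 by simp
    qed (use cube_mult_exp_le_min[OF s0] in auto)
    finally show ?thesis unfolding dense_error_bound_def using T2 by linarith
  next
    case False
    have "real n ^ 3 * ((1 - p) ^ 3 * (1 - p ^ 2 * (1 - p)) ^ (n - 3))
        \<le> real n ^ 3 * (1 * (exp 3 * exp (- (real n powr (1/3)) / 2)))"
    proof (intro mult_left_mono mult_mono)
      show "(1 - p ^ 2 * (1 - p)) ^ (n - 3) \<le> exp 3 * exp (- (real n powr (1/3)) / 2)"
        using triangle_factor_le_small_p[of 3 n p] n p False by simp
    qed (use p q bb in \<open>auto intro!: power_le_one\<close>)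
    also have "\<dots> \<le> exp 1 * min (s ^ 3) (16 ^ 4 / s) + exp 3 * real n ^ 3 * exp (- (real n powr (1/3)) / 2)"
      using T1 by (simp add: algebra_simps)
    finally show ?thesis unfolding dense_error_bound_def by simp
  qed
  finally show ?thesis unfolding s_def .
qed

lemma prob_bad_events_le:
  assumes n: "large_order n" and p: "0 \<le> p" "p \<le> 1"
    and w: "0 \<le> w" "w \<le> ln (ln (real n))" "(ln (real n) + ln (ln (real n)) + w) / real n \<le> p"
  shows "gnp_prob n p (\<lambda>E. \<exists>a. star_cut_vertex n E a)
      \<le> sparse_error_bound n w + dense_error_bound n (real n * (1 - p))"
    and "gnp_prob n p (\<lambda>E. \<exists>a. star_cut_vertex n E a \<and> \<not> at_most_one_big_component E ({0..<n} - star E a))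
      \<le> sparse_error_bound n w + two_components_error_bound n"
proof -
  have "6 \<le> n"
    using n unfolding large_order_def by simp
  have nonneg: "0 \<le> sparse_error_bound n w" "0 \<le> dense_error_bound n (real n * (1 - p))"
      "0 \<le> two_components_error_bound n"
    using \<open>6 \<le> n\<close> p unfolding sparse_error_bound_def dense_error_bound_def two_components_error_bound_def
    by (auto intro!: add_nonneg_nonneg)
  have "gnp_prob n p (\<lambda>E. \<exists>a. star_cut_vertex n E a \<and> \<not> at_most_one_big_component E ({0..<n} - star E a))
      \<le> gnp_prob n p (\<lambda>E. \<exists>a. star_cut_vertex n E a)"
    using p by (intro gnp_prob_mono) auto
  moreover have "gnp_prob n p (\<lambda>E. \<exists>a. star_cut_vertex n E a) \<le> sparse_error_bound n w"
    if "p \<le> real n powr (-1/3)"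
    using n w that by (rule prob_star_cut_vertex_le_sparse_regime)
  moreover have "gnp_prob n p (\<lambda>E. \<exists>a. star_cut_vertex n E a) \<le> dense_error_bound n (real n * (1 - p))"
      "gnp_prob n p (\<lambda>E. \<exists>a. star_cut_vertex n E a \<and> \<not> at_most_one_big_component E ({0..<n} - star E a))
        \<le> two_components_error_bound n"
    if "real n powr (-1/3) < p"
    using prob_star_cut_vertex_le_dense_regime prob_two_big_components_le_dense_regime \<open>6 \<le> n\<close> p that
    by auto
  ultimately show "gnp_prob n p (\<lambda>E. \<exists>a. star_cut_vertex n E a)
      \<le> sparse_error_bound n w + dense_error_bound n (real n * (1 - p))"
    and "gnp_prob n p (\<lambda>E. \<exists>a. star_cut_vertex n E a \<and> \<not> at_most_one_big_component E ({0..<n} - star E a))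
      \<le> sparse_error_bound n w + two_components_error_bound n"
    using nonneg by (cases "p \<le> real n powr (-1/3)"; force)+
qed

lemma filterlim_min_at_top:
  fixes f g :: "'a \<Rightarrow> real"
  assumes "filterlim f at_top F" "filterlim g at_top F"
  shows "filterlim (\<lambda>x. min (f x) (g x)) at_top F"
  unfolding filterlim_at_top
proof
  fix Z :: real
  have "\<forall>\<^sub>F x in F. Z \<le> f x" "\<forall>\<^sub>F x in F. Z \<le> g x"
    using assms unfolding filterlim_at_top by blast+
  then show "\<forall>\<^sub>F x in F. Z \<le> min (f x) (g x)"
    by eventually_elim simp
qed

lemma sparse_error_bound_tendsto_zero:
  assumes "filterlim w at_top sequentially"
  shows "(\<lambda>n. sparse_error_bound n (w n)) \<longlonglongrightarrow> 0"
proof -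
  have "(\<lambda>n. exp (- w n)) \<longlonglongrightarrow> 0"
    using assms by (simp add: filterlim_uminus_at_top filterlim_compose[OF exp_at_bot])
  moreover have "(\<lambda>n::nat. exp 2 * ln (real n) ^ 4 * exp (- ln (real n) / 2)
     + 4 * exp 6 / ln (real n) + 8 * exp 9 / ln (real n)
     + real n ^ 3 / ln (real n) * (exp 3 * ln (real n) * exp (- ln (real n) / 12)) ^ 60
     + real n ^ 2 * (21 / 25) powr ((real n - 1) / 2)) \<longlonglongrightarrow> 0"
    by real_asymp
  ultimately have "(\<lambda>n. 4 * exp 2 * exp (- w n) + (exp 2 * ln (real n) ^ 4 * exp (- ln (real n) / 2)
     + 4 * exp 6 / ln (real n) + 8 * exp 9 / ln (real n)
     + real n ^ 3 / ln (real n) * (exp 3 * ln (real n) * exp (- ln (real n) / 12)) ^ 60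
     + real n ^ 2 * (21 / 25) powr ((real n - 1) / 2))) \<longlonglongrightarrow> 4 * exp 2 * 0 + 0"
    by (intro tendsto_add tendsto_mult_left)
  then show ?thesis
    unfolding sparse_error_bound_def by (simp add: add.assoc)
qed

lemma two_components_error_bound_tendsto_zero: "two_components_error_bound \<longlonglongrightarrow> 0"
proof -
  have "(\<lambda>n::nat. exp 2 * 32 ^ 8 / real n ^ 3 + exp 3 * real n ^ 5 * exp (- (real n powr (1/3)) / 2)) \<longlonglongrightarrow> 0"
    by real_asymp
  then show ?thesis
    unfolding two_components_error_bound_def .
qed

text \<open>This is the only place where hypothesis (ii) of the theorem enters: the factor
  \<open>min (s\<^sup>3) (16\<^sup>4 / s)\<close> with \<open>s = n (1 - p)\<close> is small only when \<open>s\<close> is small or large.\<close>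

lemma dense_error_bound_tendsto_zero:
  assumes s0: "\<And>n. 0 \<le> s n" and s: "(s \<longlonglongrightarrow> 0) \<or> filterlim s at_top sequentially"
  shows "(\<lambda>n. dense_error_bound n (s n)) \<longlonglongrightarrow> 0"
proof -
  have "(\<lambda>n. min (s n ^ 3) (16 ^ 4 / s n)) \<longlonglongrightarrow> 0"
    using s
  proof
    assume "s \<longlonglongrightarrow> 0"
    then have cube: "(\<lambda>n. s n ^ 3) \<longlonglongrightarrow> 0"
      using tendsto_power[of s 0 sequentially 3] by simp
    show ?thesis
      by (rule tendsto_sandwich[OF _ _ tendsto_const cube]) (use s0 in auto)
  next
    assume "filterlim s at_top sequentially"
    then have "(\<lambda>n. 16 ^ 4 * inverse (s n)) \<longlonglongrightarrow> 16 ^ 4 * 0"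
      by (intro tendsto_mult_left tendsto_inverse_0_at_top)
    then have inv: "(\<lambda>n. 16 ^ 4 / s n) \<longlonglongrightarrow> 0"
      by (simp add: divide_inverse)
    show ?thesis
      by (rule tendsto_sandwich[OF _ _ tendsto_const inv]) (use s0 in auto)
  qed
  moreover have "(\<lambda>n::nat. exp 3 * real n ^ 3 * exp (- (real n powr (1/3)) / 2)) \<longlonglongrightarrow> 0"
    by real_asymp
  ultimately have "(\<lambda>n. exp 1 * min (s n ^ 3) (16 ^ 4 / s n) + exp 3 * real n ^ 3 * exp (- (real n powr (1/3)) / 2))
      \<longlonglongrightarrow> exp 1 * 0 + 0"
    by (intro tendsto_add tendsto_mult_left)
  then show ?thesis
    unfolding dense_error_bound_def by simp
qed

lemma tendsto_one_minus_of_le: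
  fixes f g :: "nat \<Rightarrow> real"
  assumes "\<forall>\<^sub>F n in sequentially. 0 \<le> f n \<and> f n \<le> g n" "g \<longlonglongrightarrow> 0"
  shows "(\<lambda>n. 1 - f n) \<longlonglongrightarrow> 1"
proof -
  have "f \<longlonglongrightarrow> 0"
    by (rule tendsto_sandwich[OF _ _ tendsto_const assms(2)]) (use assms(1) in \<open>auto elim: eventually_mono\<close>)
  then show ?thesis
    using tendsto_diff[OF tendsto_const, of f 0 sequentially 1] by simp
qed

lemma eventually_bad_events_le:
  fixes p \<omega> :: "nat \<Rightarrow> real"
  assumes prob: "\<And>n. 0 \<le> p n \<and> p n \<le> 1"
    and \<omega>: "filterlim \<omega> at_top sequentially"
      "\<forall>\<^sub>F n in sequentially. p n > (ln (real n) + ln (ln (real n)) + \<omega> n) / real n"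
  defines "w \<equiv> \<lambda>n. min (\<omega> n) (ln (ln (real n)))"
  shows "filterlim w at_top sequentially"
    and "\<forall>\<^sub>F n in sequentially. 0 \<le> gnp_prob n (p n) (\<lambda>E. \<exists>a. star_cut_vertex n E a) \<and>
      gnp_prob n (p n) (\<lambda>E. \<exists>a. star_cut_vertex n E a)
        \<le> sparse_error_bound n (w n) + dense_error_bound n (real n * (1 - p n))"
    and "\<forall>\<^sub>F n in sequentially.
      0 \<le> gnp_prob n (p n) (\<lambda>E. \<exists>a. star_cut_vertex n E a \<and> \<not> at_most_one_big_component E ({0..<n} - star E a)) \<and>
      gnp_prob n (p n) (\<lambda>E. \<exists>a. star_cut_vertex n E a \<and> \<not> at_most_one_big_component E ({0..<n} - star E a))
        \<le> sparse_error_bound n (w n) + two_components_error_bound n"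
proof -
  have "filterlim (\<lambda>n::nat. ln (ln (real n))) at_top sequentially"
    by real_asymp
  then show w: "filterlim w at_top sequentially"
    unfolding w_def using \<omega>(1) filterlim_min_at_top by blast
  \<comment> \<open>Capping \<open>\<omega>\<close> at \<open>ln ln n\<close> keeps the threshold \<open>ln n + ln ln n + w\<close> below \<open>2 ln n\<close>.\<close>
  have "\<forall>\<^sub>F n in sequentially. large_order n \<and> 0 \<le> w n \<and>
      (ln (real n) + ln (ln (real n)) + w n) / real n \<le> p n"
    using eventually_large_order \<omega>(2) w[unfolded filterlim_at_top, rule_format, of 0]
  proof eventually_elim
    case (elim n)
    have "(ln (real n) + ln (ln (real n)) + w n) / real n \<le> (ln (real n) + ln (ln (real n)) + \<omega> n) / real n"
      unfolding w_def by (intro divide_right_mono) auto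
    then show ?case
      using elim by auto
  qed
  then show "\<forall>\<^sub>F n in sequentially. 0 \<le> gnp_prob n (p n) (\<lambda>E. \<exists>a. star_cut_vertex n E a) \<and>
      gnp_prob n (p n) (\<lambda>E. \<exists>a. star_cut_vertex n E a)
        \<le> sparse_error_bound n (w n) + dense_error_bound n (real n * (1 - p n))"
    and "\<forall>\<^sub>F n in sequentially.
      0 \<le> gnp_prob n (p n) (\<lambda>E. \<exists>a. star_cut_vertex n E a \<and> \<not> at_most_one_big_component E ({0..<n} - star E a)) \<and>
      gnp_prob n (p n) (\<lambda>E. \<exists>a. star_cut_vertex n E a \<and> \<not> at_most_one_big_component E ({0..<n} - star E a))
        \<le> sparse_error_bound n (w n) + two_components_error_bound n"
    using prob prob_bad_events_le gnp_prob_nonneg by (auto elim!: eventually_mono simp: w_def)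
qed

theorem theorem1p5:
  fixes p :: "nat \<Rightarrow> real"
  assumes prob: "\<And>n. 0 \<le> p n \<and> p n \<le> 1"
    and hyp_i: "\<exists>\<omega> :: nat \<Rightarrow> real. filterlim \<omega> at_top sequentially \<and>
        (\<forall>\<^sub>F n in sequentially. p n > (ln (real n) + ln (ln (real n)) + \<omega> n) / real n)"
  shows "((((\<lambda>n. real n * (1 - p n)) \<longlonglongrightarrow> 0)
            \<or> filterlim (\<lambda>n. real n * (1 - p n)) at_top sequentially)
          \<longrightarrow> ((\<lambda>n. gnp_prob n (p n) (\<lambda>E. \<not> (\<exists>a. star_cut_vertex n E a))) \<longlonglongrightarrow> 1))
        \<and> ((\<lambda>n. gnp_prob n (p n)
            (\<lambda>E. \<forall>a. star_cut_vertex n E a \<longrightarrow>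
                  at_most_one_big_component E ({0..<n} - star E a))) \<longlonglongrightarrow> 1)"
proof -
  obtain \<omega> :: "nat \<Rightarrow> real" where \<omega>: "filterlim \<omega> at_top sequentially"
    "\<forall>\<^sub>F n in sequentially. p n > (ln (real n) + ln (ln (real n)) + \<omega> n) / real n"
    using hyp_i by blast
  note bounds = eventually_bad_events_le[OF prob \<omega>]
  have "gnp_prob n (p n) (\<lambda>E. \<not> (\<exists>a. star_cut_vertex n E a)) = 1 - gnp_prob n (p n) (\<lambda>E. \<exists>a. star_cut_vertex n E a)"
    "gnp_prob n (p n) (\<lambda>E. \<forall>a. star_cut_vertex n E a \<longrightarrow> at_most_one_big_component E ({0..<n} - star E a))
      = 1 - gnp_prob n (p n) (\<lambda>E. \<exists>a. star_cut_vertex n E a \<and> \<not> at_most_one_big_component E ({0..<n} - star E a))"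
    for n
    using prob[of n] gnp_prob_not[of "p n" n "\<lambda>E. \<exists>a. star_cut_vertex n E a"]
      gnp_prob_not[of "p n" n "\<lambda>E. \<exists>a. star_cut_vertex n E a \<and> \<not> at_most_one_big_component E ({0..<n} - star E a)"]
    by simp_all
  moreover have "(\<lambda>n. 1 - gnp_prob n (p n) (\<lambda>E. \<exists>a. star_cut_vertex n E a)) \<longlonglongrightarrow> 1"
    if "((\<lambda>n. real n * (1 - p n)) \<longlonglongrightarrow> 0) \<or> filterlim (\<lambda>n. real n * (1 - p n)) at_top sequentially"
    using bounds(2) tendsto_add[OF sparse_error_bound_tendsto_zero[OF bounds(1)] dense_error_bound_tendsto_zero[OF _ that]]
    using prob by (intro tendsto_one_minus_of_le) auto
  moreover have "(\<lambda>n. 1 - gnp_prob n (p n)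
      (\<lambda>E. \<exists>a. star_cut_vertex n E a \<and> \<not> at_most_one_big_component E ({0..<n} - star E a))) \<longlonglongrightarrow> 1"
    using bounds(3) tendsto_add[OF sparse_error_bound_tendsto_zero[OF bounds(1)] two_components_error_bound_tendsto_zero]
    by (intro tendsto_one_minus_of_le) auto
  ultimately show ?thesis
    by simp
qed

end
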